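(* Let $\lambda=(\lambda_1,\ldots,\lambda_\ell)$ be a partition with $\ell$ positive parts, and let $\mu=(\lambda_a,\lambda_{a+1},\ldots,\lambda_b)$ for some $1\leq a\leq b\leq\ell$ (a consecutive subpartition), having $m=b-a+1$ parts. Suppose $n\geq\ell$. Then the poset $\mathcal B_\mu^{n-\ell+m}$ is isomorphic to an interval in the poset $\mathcal B_\lambda^n$. In particular, if $\mathcal B_\mu^{n-\ell+m}$ is not a lattice, then $\mathcal B_\lambda^n$ is not a lattice.
   Context: For $N\geq 1$ and a partition $\nu$ with at most $N$ positive parts, $\mathcal B_\nu^N$ is the set of semistandard Young tableaux of shape $\nu$ (rows weakly increasing, columns strictly increasing) with entries in $\{1,\ldots,N+1\}$, partially ordered by the reflexive transitive closure of $T<F_i(T)$ for $i\in\{1,\ldots,N\}$ with $F_i(T)\neq 0$. Here $F_i$ is the type A crystal lowering operator: in the reading word of $T$ (rows read from bottom to top, each row left to right) keep only letters $i$ and $i+1$, replace each $i$ by ")" and each $i+1$ by "(", and match parentheses in the usual way; if there is no unmatched ")", $F_i(T)=0$; otherwise $F_i(T)$ is obtained by changing the entry $i$ corresponding to the rightmost unmatched ")" into $i+1$. *)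

theory Defs
  imports Main
begin

definition is_partition :: "nat list \<Rightarrow> bool" where
  "is_partition \<nu> \<longleftrightarrow> sorted (rev \<nu>) \<and> (\<forall>x\<in>set \<nu>. 0 < x)"

text \<open>Tableaux are lists of rows (top row first), each row a list of entries.
  Semistandard tableaux of shape nu with entries in 1..N+1.\<close>
definition is_ssyt :: "nat \<Rightarrow> nat list \<Rightarrow> nat list list \<Rightarrow> bool" where
  "is_ssyt N \<nu> T \<longleftrightarrow>
     length T = length \<nu> \<and>
     (\<forall>i<length \<nu>. length (T ! i) = \<nu> ! i) \<and>
     (\<forall>r\<in>set T. \<forall>x\<in>set r. 1 \<le> x \<and> x \<le> N + 1) \<and>
     (\<forall>r\<in>set T. sorted r) \<and>
     (\<forall>i j. Suc i < length T \<and> j < length (T ! Suc i) \<longrightarrow> T ! i ! j < T ! Suc i ! j)"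

definition Btab :: "nat \<Rightarrow> nat list \<Rightarrow> nat list list set" where
  "Btab N \<nu> = {T. is_ssyt N \<nu> T}"

definition reading_word :: "nat list list \<Rightarrow> nat list" where
  "reading_word T = concat (rev T)"

fun split_by :: "nat list \<Rightarrow> 'a list \<Rightarrow> 'a list list" where
  "split_by [] w = []"
| "split_by (l # ls) w = take l w # split_by ls (drop l w)"

text \<open>Bracket matching: letter i is ")" and letter i+1 is "(".  Scanning left to right
  with d = number of currently unmatched "(" and p = current position, returns the
  positions (increasing) of the unmatched ")".\<close>
fun unmatched_closes :: "nat \<Rightarrow> nat \<Rightarrow> nat \<Rightarrow> nat list \<Rightarrow> nat list" where
  "unmatched_closes i d p [] = []"
| "unmatched_closes i d p (x # xs) =
     (if x = Suc i then unmatched_closes i (Suc d) (Suc p) xs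
      else if x = i then
        (if 0 < d then unmatched_closes i (d - 1) (Suc p) xs
         else p # unmatched_closes i d (Suc p) xs)
      else unmatched_closes i d (Suc p) xs)"

text \<open>Crystal lowering operator F_i; None represents 0.\<close>
definition Fop :: "nat \<Rightarrow> nat list list \<Rightarrow> nat list list option" where
  "Fop i T =
    (let w = reading_word T; u = unmatched_closes i 0 0 w in
     if u = [] then None
     else Some (rev (split_by (rev (map length T)) (w[last u := Suc i]))))"

definition Bstep :: "nat \<Rightarrow> nat list \<Rightarrow> nat list list \<Rightarrow> nat list list \<Rightarrow> bool" where
  "Bstep N \<nu> S T \<longleftrightarrow> S \<in> Btab N \<nu> \<and> T \<in> Btab N \<nu> \<and>
     (\<exists>i. 1 \<le> i \<and> i \<le> N \<and> Fop i S = Some T)"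

definition Ble :: "nat \<Rightarrow> nat list \<Rightarrow> nat list list \<Rightarrow> nat list list \<Rightarrow> bool" where
  "Ble N \<nu> = (Bstep N \<nu>)\<^sup>*\<^sup>*"

definition interval :: "'a set \<Rightarrow> ('a \<Rightarrow> 'a \<Rightarrow> bool) \<Rightarrow> 'a \<Rightarrow> 'a \<Rightarrow> 'a set" where
  "interval A le x y = {z \<in> A. le x z \<and> le z y}"

definition poset_iso :: "'a set \<Rightarrow> ('a \<Rightarrow> 'a \<Rightarrow> bool) \<Rightarrow> 'b set \<Rightarrow> ('b \<Rightarrow> 'b \<Rightarrow> bool) \<Rightarrow> bool" where
  "poset_iso A leA C leC \<longleftrightarrow>
     (\<exists>f. bij_betw f A C \<and> (\<forall>x\<in>A. \<forall>y\<in>A. leA x y \<longleftrightarrow> leC (f x) (f y)))"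

definition is_lattice :: "'a set \<Rightarrow> ('a \<Rightarrow> 'a \<Rightarrow> bool) \<Rightarrow> bool" where
  "is_lattice A le \<longleftrightarrow>
     (\<forall>x\<in>A. \<forall>y\<in>A.
        (\<exists>j\<in>A. le x j \<and> le y j \<and> (\<forall>z\<in>A. le x z \<and> le y z \<longrightarrow> le j z)) \<and>
        (\<exists>m\<in>A. le m x \<and> le m y \<and> (\<forall>z\<in>A. le z x \<and> le z y \<longrightarrow> le z m)))"

end

(* Freeze the rows above the block to their smallest possible entries (row t filled with t) and
   the rows below it to the entries of the maximal tableau of shape lambda, and put a tableau of
   shape mu, shifted by a - 1, into the rows a, ..., b. The frozen rows contain no letters
   i + a - 1, i + a for 1 <= i <= n - l + m, so on reading words F_(i+a-1) acts on such a tableau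
   exactly as F_i acts on the block, and no other operator maps one of them to another.
   Crystal operators only increase letters of the reading word, so every tableau between the
   images of the minimal and the maximal tableau of shape mu agrees with them on the frozen rows
   and is itself an image. Every tableau of shape mu lies between these two: a non-minimal
   tableau is some F_i(V), and a non-maximal one admits some F_i. Hence the image is an interval
   isomorphic to B_mu, and an interval of a lattice is a lattice. *)

theory Submission
  imports Defs
begin

section \<open>Bracket matching on words\<close>

text \<open>The number of unmatched letters \<open>i + 1\<close> after reading a word that starts with \<open>d\<close> of them;
  it is the counter \<open>d\<close> carried along by \<open>unmatched_closes\<close>.\<close>

fun bracket_depth :: "nat \<Rightarrow> nat \<Rightarrow> nat list \<Rightarrow> nat" where
  "bracket_depth i d [] = d"
| "bracket_depth i d (x # xs) =
     bracket_depth i (if x = Suc i then Suc d else if x = i then d - 1 else d) xs"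

lemma unmatched_closes_append:
  "unmatched_closes i d p (xs @ ys) =
     unmatched_closes i d p xs @ unmatched_closes i (bracket_depth i d xs) (p + length xs) ys"
  by (induction xs arbitrary: d p) auto

lemma bracket_depth_append:
  "bracket_depth i d (xs @ ys) = bracket_depth i (bracket_depth i d xs) ys"
  by (induction xs arbitrary: d) auto

lemma unmatched_closes_shift:
  "unmatched_closes i d (p + q) w = map (\<lambda>e. e + q) (unmatched_closes i d p w)"
proof (induction w arbitrary: d p)
  case (Cons x w)
  show ?case using Cons.IH[of _ "Suc p"] by simp
qed simp

lemma unmatched_closes_nth:
  "e \<in> set (unmatched_closes i d p w) \<Longrightarrow> p \<le> e \<and> e < p + length w \<and> w ! (e - p) = i"
proof (induction w arbitrary: d p)
  case (Cons x xs)
  have tail: "Suc p \<le> e \<and> e < Suc p + length xs \<and> xs ! (e - Suc p) = i"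
    if "e \<in> set (unmatched_closes i d' (Suc p) xs)" for d'
    using Cons.IH that by blast
  have "(x # xs) ! (e - p) = xs ! (e - Suc p)" if "Suc p \<le> e"
    using that by (simp add: Suc_diff_Suc[symmetric])
  with Cons.prems show ?case
    by (auto split: if_splits dest!: tail)
qed simp

lemma unmatched_closes_map_add:
  "unmatched_closes (i + c) d p (map (\<lambda>x. x + c) w) = unmatched_closes i d p w"
  by (induction w arbitrary: d p) auto

lemma unmatched_closes_no_brackets:
  "\<forall>x\<in>set w. x \<noteq> i \<and> x \<noteq> Suc i \<Longrightarrow> unmatched_closes i d p w = [] \<and> bracket_depth i d w = d"
  by (induction w arbitrary: d p) auto

definition count_below :: "nat \<Rightarrow> nat list \<Rightarrow> nat" where
  "count_below c xs = length (filter (\<lambda>x. x < c) xs)"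

lemma count_below_Suc: "count_below (Suc i) xs = count_below i xs + count_list xs i"
  by (induction xs) (auto simp: count_below_def)

lemma count_below_le_length: "count_below c xs \<le> length xs"
  unfolding count_below_def by (rule length_filter_le)

lemma count_list_eq_card: "count_list xs c = card {k. k < length xs \<and> xs ! k = c}"
  by (simp add: count_list_eq_length_filter length_filter_conv_card eq_commute)

lemma count_list_ge:
  assumes "\<And>k. m \<le> k \<Longrightarrow> k < m + a \<Longrightarrow> k < length xs \<and> xs ! k = c"
  shows "a \<le> count_list xs c"
proof -
  have "{m..<m + a} \<subseteq> {k. k < length xs \<and> xs ! k = c}" using assms by auto
  then have "card {m..<m + a} \<le> card {k. k < length xs \<and> xs ! k = c}"
    by (intro card_mono) auto
  then show ?thesis by (simp add: count_list_eq_card)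
qed

lemma length_filter_list_update:
  "j < length xs \<Longrightarrow> length (filter P (xs[j := v])) + (if P (xs ! j) then 1 else 0)
     = length (filter P xs) + (if P v then 1 else 0)"
proof (induction xs arbitrary: j)
  case (Cons x xs)
  then show ?case by (cases j) auto
qed simp

lemma count_list_list_update:
  "j < length xs \<Longrightarrow> count_list (xs[j := v]) c + (if xs ! j = c then 1 else 0)
     = count_list xs c + (if v = c then 1 else 0)"
  using length_filter_list_update[of j xs "(=) c" v]
  by (simp add: count_list_eq_length_filter eq_commute)

lemma count_below_list_update:
  "j < length xs \<Longrightarrow> count_below c (xs[j := v]) + (if xs ! j < c then 1 else 0)
     = count_below c xs + (if v < c then 1 else 0)"
  unfolding count_below_def by (rule length_filter_list_update)

lemma sorted_nth_less_iff:
  "sorted xs \<Longrightarrow> k < length xs \<Longrightarrow> xs ! k < c \<longleftrightarrow> k < count_below c xs"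
proof (induction xs arbitrary: k)
  case (Cons x xs)
  have s: "sorted xs" and ge: "\<forall>y\<in>set xs. x \<le> y" using Cons.prems by auto
  show ?case
  proof (cases "x < c")
    case True
    then show ?thesis using Cons.IH[OF s] Cons.prems by (cases k) (auto simp: count_below_def)
  next
    case False
    then have "count_below c (x # xs) = 0"
      using ge unfolding count_below_def by (auto simp: filter_empty_conv)
    moreover have "\<not> (x # xs) ! k < c" using False ge Cons.prems
      by (cases k) (auto, meson le_trans not_less nth_mem)
    ultimately show ?thesis by simp
  qed
qed simp

lemma sorted_nth_eq_between:
  assumes "sorted xs" "count_below i xs \<le> k" "k < count_below (Suc i) xs"
  shows "k < length xs" "xs ! k = i"
proof -
  show k: "k < length xs" using assms(3) count_below_le_length[of "Suc i" xs] by linarith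
  show "xs ! k = i"
    using sorted_nth_less_iff[OF assms(1) k, of i] sorted_nth_less_iff[OF assms(1) k, of "Suc i"]
      assms
    by simp
qed

lemma unmatched_closes_sorted:
  "sorted xs \<Longrightarrow> unmatched_closes i d p xs =
     [p + count_below i xs + d ..< p + count_below (Suc i) xs]"
proof (induction xs arbitrary: d p)
  case Nil then show ?case by (simp add: count_below_def)
next
  case (Cons x xs)
  have s: "sorted xs" and ge: "\<forall>y\<in>set xs. x \<le> y" using Cons.prems by auto
  consider "x < i" | "x = i" | "i < x" by linarith
  then show ?case
  proof cases
    case 1
    then show ?thesis using Cons.IH[OF s, of d "Suc p"] by (simp add: count_below_def)
  next
    case 2
    then have "count_below i xs = 0"
      using ge unfolding count_below_def by (auto simp: filter_empty_conv)
    with 2 show ?thesis using Cons.IH[OF s, of 0 "Suc p"] Cons.IH[OF s, of "d - 1" "Suc p"]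
      by (cases "d = 0") (simp_all add: count_below_Suc count_below_def upt_conv_Cons del: upt_Suc)
  next
    case 3
    then have "count_below (Suc i) xs = 0"
      using ge unfolding count_below_def by (auto simp: filter_empty_conv)
    with 3 show ?thesis
      using Cons.IH[OF s, of "Suc d" "Suc p"] Cons.IH[OF s, of d "Suc p"] count_below_Suc[of i xs]
      by (simp add: count_below_def)
  qed
qed

lemma bracket_depth_sorted:
  "sorted xs \<Longrightarrow> bracket_depth i d xs = (d - count_list xs i) + count_list xs (Suc i)"
proof (induction xs arbitrary: d)
  case (Cons x xs)
  have s: "sorted xs" and ge: "\<forall>y\<in>set xs. x \<le> y" using Cons.prems by auto
  consider "x < i" | "x = i" | "x = Suc i" | "Suc i < x" by linarith
  then show ?case
  proof cases
    case 3
    then have "count_list xs i = 0" using ge by (auto simp: count_list_0_iff)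
    with 3 show ?thesis using Cons.IH[OF s, of "Suc d"] by simp
  next
    case 4
    then have "count_list xs i = 0" "count_list xs (Suc i) = 0"
      using ge by (auto simp: count_list_0_iff)
    with 4 show ?thesis using Cons.IH[OF s, of d] by simp
  qed (use Cons.IH[OF s] in simp_all)
qed simp

section \<open>Reading words and the operators \<open>F\<^sub>i\<close> row by row\<close>

lemma split_by_concat: "split_by (map length xss) (concat xss) = xss"
  by (induction xss) auto

lemma concat_split_by: "sum_list ls = length w \<Longrightarrow> concat (split_by ls w) = w"
  by (induction ls arbitrary: w) auto

lemma split_by_append:
  "split_by (ls1 @ ls2) w = split_by ls1 w @ split_by ls2 (drop (sum_list ls1) w)"
  by (induction ls1 arbitrary: w) (auto simp: add.commute)

lemma split_by_append_right:
  "sum_list ls \<le> length xs \<Longrightarrow> split_by ls (xs @ ys) = split_by ls xs"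
  by (induction ls arbitrary: xs) auto

lemma split_by_map: "split_by ls (map g w) = map (map g) (split_by ls w)"
  by (induction ls arbitrary: w) (auto simp: take_map drop_map)

lemma length_reading_word: "length (reading_word T) = sum_list (map length T)"
  unfolding reading_word_def by (simp add: length_concat rev_map[symmetric])

lemma reading_word_append:
  "reading_word (A @ B) = reading_word B @ reading_word A"
  unfolding reading_word_def by simp

lemma reading_word_map: "reading_word (map (map g) T) = map g (reading_word T)"
  unfolding reading_word_def by (simp add: map_concat rev_map)

lemma reading_word_split_at_row:
  assumes "s < length T"
  shows "reading_word T = reading_word (drop (Suc s) T) @ T ! s @ reading_word (take s T)"
proof -
  have "T = take s T @ [T ! s] @ drop (Suc s) T" using assms by (simp add: id_take_nth_drop)
  then show ?thesis by (metis reading_word_append reading_word_def append.assoc concat.simps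
    rev_singleton_conv self_append_conv2)
qed

definition refill :: "nat list list \<Rightarrow> nat list \<Rightarrow> nat list list" where
  "refill T w = rev (split_by (rev (map length T)) w)"

lemma refill_reading_word: "map length T' = map length T \<Longrightarrow> refill T (reading_word T') = T'"
  unfolding refill_def reading_word_def by (metis rev_map rev_rev_ident split_by_concat)

lemma reading_word_inj:
  "map length X = map length Y \<Longrightarrow> reading_word X = reading_word Y \<Longrightarrow> X = Y"
  by (metis refill_reading_word)

lemma reading_word_refill:
  "length w = length (reading_word T) \<Longrightarrow> reading_word (refill T w) = w"
  unfolding refill_def reading_word_def
  by (simp add: concat_split_by length_concat rev_map[symmetric])

lemma refill_append:
  assumes "length wA = length (reading_word A)" "length wB = length (reading_word B)"
  shows "refill (A @ B) (wB @ wA) = refill A wA @ refill B wB"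
proof -
  have "sum_list (rev (map length B)) = length wB" using assms(2) length_reading_word by simp
  then show ?thesis unfolding refill_def by (simp add: split_by_append split_by_append_right)
qed

lemma refill_map: "refill (map (map g) T) (map g w) = map (map g) (refill T w)"
  unfolding refill_def by (simp add: split_by_map rev_map comp_def)

lemma Fop_refill:
  "Fop i T = (let u = unmatched_closes i 0 0 (reading_word T) in
     if u = [] then None else Some (refill T ((reading_word T)[last u := Suc i])))"
  unfolding Fop_def refill_def Let_def by simp

lemma reading_word_Fop:
  assumes "Fop i X = Some Y"
  obtains p where "p < length (reading_word X)" "reading_word X ! p = i"
    "reading_word Y = (reading_word X)[p := Suc i]"
proof -
  let ?w = "reading_word X"
  let ?u = "unmatched_closes i 0 0 ?w"
  have "?u \<noteq> []" and Y: "Y = refill X (?w[last ?u := Suc i])"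
    using assms unfolding Fop_refill Let_def by (auto split: if_splits)
  then have "last ?u \<in> set ?u" by simp
  from unmatched_closes_nth[OF this] have "last ?u < length ?w" "?w ! last ?u = i" by auto
  moreover have "reading_word Y = ?w[last ?u := Suc i]"
    unfolding Y by (simp add: reading_word_refill)
  ultimately show ?thesis using that by blast
qed

text \<open>The number of unmatched letters \<open>i + 1\<close> in the rows \<open>t, t + 1, \<dots>\<close>, which precede the
  rows above them in the reading word.\<close>

definition depth_below :: "nat \<Rightarrow> nat list list \<Rightarrow> nat \<Rightarrow> nat" where
  "depth_below i T t = bracket_depth i 0 (reading_word (drop t T))"

lemma depth_below_row:
  "t < length T \<Longrightarrow> depth_below i T t = bracket_depth i (depth_below i T (Suc t)) (T ! t)"
  unfolding depth_below_def reading_word_def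
  by (simp add: Cons_nth_drop_Suc[symmetric] bracket_depth_append)

lemma depth_below_beyond: "length T \<le> t \<Longrightarrow> depth_below i T t = 0"
  unfolding depth_below_def reading_word_def by simp

text \<open>In a sorted row the letters \<open>i\<close> precede the letters \<open>i + 1\<close>, so in the reading word they
  can only be matched by letters \<open>i + 1\<close> of lower rows.\<close>

definition active_row :: "nat \<Rightarrow> nat list list \<Rightarrow> nat \<Rightarrow> bool" where
  "active_row i T t \<longleftrightarrow> t < length T \<and> depth_below i T (Suc t) < count_list (T ! t) i"

lemma unmatched_closes_inactive_rows:
  assumes sorted: "\<forall>r\<in>set T. sorted r"
  shows "s \<le> length T \<Longrightarrow> \<forall>t<s. \<not> active_row i T t \<Longrightarrow>
     unmatched_closes i (depth_below i T s) p (reading_word (take s T)) = []"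
proof (induction s arbitrary: p)
  case (Suc s)
  have s: "s < length T" using Suc.prems by simp
  then have "sorted (T ! s)" using sorted by simp
  moreover have "\<not> active_row i T s" using Suc.prems by simp
  ultimately have "unmatched_closes i (depth_below i T (Suc s)) p (T ! s) = []"
    using s by (simp add: unmatched_closes_sorted active_row_def count_below_Suc)
  moreover have "reading_word (take (Suc s) T) = T ! s @ reading_word (take s T)"
    using s by (simp add: take_Suc_conv_app_nth reading_word_append reading_word_def)
  ultimately show ?case
    using Suc s by (simp add: unmatched_closes_append depth_below_row[symmetric])
qed (simp add: reading_word_def)

lemma Fop_topmost_active_row:
  assumes sorted: "\<forall>r\<in>set T. sorted r"
    and active: "active_row i T s" and topmost: "\<forall>t<s. \<not> active_row i T t"
  shows "Fop i T = Some (T[s := (T ! s)[count_below (Suc i) (T ! s) - 1 := Suc i]])"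
proof -
  define A where "A = reading_word (drop (Suc s) T)"
  define R where "R = T ! s"
  define C where "C = reading_word (take s T)"
  define j where "j = count_below (Suc i) R - 1"
  have s: "s < length T" and ds: "depth_below i T (Suc s) < count_list R i"
    using active unfolding active_row_def R_def by auto
  have w: "reading_word T = A @ R @ C"
    unfolding A_def R_def C_def using s by (rule reading_word_split_at_row)
  have "sorted R" using sorted s unfolding R_def by auto
  then have uR: "unmatched_closes i (depth_below i T (Suc s)) (length A) R
      = [length A + count_below i R + depth_below i T (Suc s) ..< length A + count_below (Suc i) R]"
    by (simp add: unmatched_closes_sorted)
  have "unmatched_closes i (depth_below i T s) q C = []" for q
    unfolding C_def using unmatched_closes_inactive_rows[OF sorted] s topmost by simp
  moreover have "bracket_depth i 0 A = depth_below i T (Suc s)"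
    unfolding A_def depth_below_def ..
  moreover have "bracket_depth i (depth_below i T (Suc s)) R = depth_below i T s"
    unfolding R_def using s by (simp add: depth_below_row)
  ultimately have u: "unmatched_closes i 0 0 (reading_word T)
      = unmatched_closes i 0 0 A @ unmatched_closes i (depth_below i T (Suc s)) (length A) R"
    unfolding w unmatched_closes_append bracket_depth_append by simp
  have "count_below (Suc i) R = count_below i R + count_list R i" by (rule count_below_Suc)
  then have ne: "unmatched_closes i 0 0 (reading_word T) \<noteq> []"
    and last: "last (unmatched_closes i 0 0 (reading_word T)) = length A + j"
    unfolding u uR j_def using ds by auto
  have jl: "j < length R" unfolding j_def using count_below_le_length[of "Suc i" R] ds
    by (simp add: count_below_Suc)
  define T' where "T' = T[s := R[j := Suc i]]"
  have "(reading_word T)[length A + j := Suc i] = A @ R[j := Suc i] @ C"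
    unfolding w using jl by (simp add: list_update_append)
  also have "\<dots> = reading_word T'"
    using reading_word_split_at_row[of s T'] s unfolding T'_def A_def C_def by simp
  finally have "Fop i T = Some (refill T (reading_word T'))"
    unfolding Fop_refill Let_def using ne last by simp
  also have "refill T (reading_word T') = T'"
    by (rule refill_reading_word)
      (metis T'_def R_def length_list_update list_update_id map_update nth_map s)
  finally show ?thesis unfolding T'_def R_def j_def .
qed

lemma Fop_eq_None_iff:
  assumes sorted: "\<forall>r\<in>set T. sorted r"
  shows "Fop i T = None \<longleftrightarrow> (\<forall>t. \<not> active_row i T t)"
proof
  assume "Fop i T = None"
  then show "\<forall>t. \<not> active_row i T t"
    using Fop_topmost_active_row[OF sorted] exists_least_iff[of "active_row i T"] by auto
next
  assume "\<forall>t. \<not> active_row i T t"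
  then have "unmatched_closes i 0 0 (reading_word T) = []"
    using unmatched_closes_inactive_rows[OF sorted, of "length T" i 0]
    by (simp add: depth_below_beyond)
  then show "Fop i T = None" unfolding Fop_refill Let_def by simp
qed

lemma Fop_SomeE:
  assumes sorted: "\<forall>r\<in>set T. sorted r" and F: "Fop i T = Some T'"
  obtains s where "active_row i T s" "\<forall>t<s. \<not> active_row i T t"
    "T' = T[s := (T ! s)[count_below (Suc i) (T ! s) - 1 := Suc i]]"
proof -
  have "\<exists>t. active_row i T t" using F Fop_eq_None_iff[OF sorted, of i] by auto
  then obtain s where "active_row i T s" "\<forall>t<s. \<not> active_row i T t"
    using exists_least_iff[of "active_row i T"] by blast
  with that show ?thesis using Fop_topmost_active_row[OF sorted] F by auto
qed

section \<open>Semistandard tableaux\<close>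

lemma is_ssytI:
  assumes "length T = length \<nu>"
    and "\<And>t. t < length \<nu> \<Longrightarrow> length (T ! t) = \<nu> ! t"
    and "\<And>t. t < length \<nu> \<Longrightarrow> sorted (T ! t)"
    and "\<And>t k. t < length \<nu> \<Longrightarrow> k < \<nu> ! t \<Longrightarrow> 1 \<le> T ! t ! k \<and> T ! t ! k \<le> N + 1"
    and "\<And>t k. Suc t < length \<nu> \<Longrightarrow> k < \<nu> ! Suc t \<Longrightarrow> T ! t ! k < T ! Suc t ! k"
  shows "is_ssyt N \<nu> T"
  unfolding is_ssyt_def using assms by (auto simp: in_set_conv_nth)

lemma ssyt_length: "is_ssyt N \<nu> T \<Longrightarrow> length T = length \<nu>"
  unfolding is_ssyt_def by auto

lemma ssyt_row_length: "is_ssyt N \<nu> T \<Longrightarrow> t < length T \<Longrightarrow> length (T ! t) = \<nu> ! t"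
  unfolding is_ssyt_def by auto

lemma ssyt_map_length: "is_ssyt N \<nu> T \<Longrightarrow> map length T = \<nu>"
  unfolding is_ssyt_def by (intro nth_equalityI) auto

lemma ssyt_sorted_rows: "is_ssyt N \<nu> T \<Longrightarrow> \<forall>r\<in>set T. sorted r"
  unfolding is_ssyt_def by blast

lemma ssyt_row_sorted: "is_ssyt N \<nu> T \<Longrightarrow> t < length T \<Longrightarrow> sorted (T ! t)"
  unfolding is_ssyt_def by auto

lemma ssyt_entry_bounds:
  "is_ssyt N \<nu> T \<Longrightarrow> t < length T \<Longrightarrow> k < length (T ! t) \<Longrightarrow> 1 \<le> T ! t ! k \<and> T ! t ! k \<le> N + 1"
  unfolding is_ssyt_def by (meson nth_mem)

lemma ssyt_reading_word_bounds:
  "is_ssyt N \<nu> T \<Longrightarrow> x \<in> set (reading_word T) \<Longrightarrow> 1 \<le> x \<and> x \<le> N + 1"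
  unfolding reading_word_def is_ssyt_def by auto

lemma ssyt_column_less:
  "is_ssyt N \<nu> T \<Longrightarrow> Suc t < length T \<Longrightarrow> k < length (T ! Suc t) \<Longrightarrow> T ! t ! k < T ! Suc t ! k"
  unfolding is_ssyt_def by blast

lemma length_reading_word_ssyt: "is_ssyt N \<nu> T \<Longrightarrow> length (reading_word T) = sum_list \<nu>"
  by (metis ssyt_map_length length_reading_word)

lemma partition_nth_antimono:
  "is_partition \<nu> \<Longrightarrow> t \<le> t' \<Longrightarrow> t' < length \<nu> \<Longrightarrow> \<nu> ! t' \<le> \<nu> ! t"
  unfolding is_partition_def by (simp add: sorted_rev_nth_mono)

lemma ssyt_row_length_antimono:
  "is_partition \<nu> \<Longrightarrow> is_ssyt N \<nu> T \<Longrightarrow> t \<le> t' \<Longrightarrow> t' < length T \<Longrightarrow>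
     length (T ! t') \<le> length (T ! t)"
  by (metis partition_nth_antimono ssyt_row_length ssyt_length le_less_trans)

lemma ssyt_entry_ge_row:
  assumes p: "is_partition \<nu>" and T: "is_ssyt N \<nu> T"
  shows "t < length T \<Longrightarrow> k < length (T ! t) \<Longrightarrow> Suc t \<le> T ! t ! k"
proof (induction t arbitrary: k)
  case 0 then show ?case using ssyt_entry_bounds[OF T] by simp
next
  case (Suc t)
  have "length (T ! Suc t) \<le> length (T ! t)"
    using ssyt_row_length_antimono[OF p T, of t "Suc t"] Suc.prems by simp
  then have "Suc t \<le> T ! t ! k" using Suc by simp
  moreover have "T ! t ! k < T ! Suc t ! k" using ssyt_column_less[OF T] Suc.prems by simp
  ultimately show ?case by simp
qed

lemma sorted_list_update:
  assumes "sorted xs" "\<And>k. k < j \<Longrightarrow> xs ! k \<le> v" "\<And>k. j < k \<Longrightarrow> k < length xs \<Longrightarrow> v \<le> xs ! k"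
  shows "sorted (xs[j := v])"
  unfolding sorted_iff_nth_mono
proof (intro allI impI)
  fix p q assume "p \<le> q" "q < length (xs[j := v])"
  then show "xs[j := v] ! p \<le> xs[j := v] ! q"
    using assms sorted_nth_mono[OF assms(1), of p q]
    by (cases "p = j"; cases "q = j") (auto simp: nth_list_update)
qed

lemma is_ssyt_update_entry:
  assumes T: "is_ssyt N \<nu> T" and s: "s < length T" and j: "j < length (T ! s)"
    and v: "1 \<le> v" "v \<le> N + 1" and sorted: "sorted ((T ! s)[j := v])"
    and above: "0 < s \<Longrightarrow> T ! (s - 1) ! j < v"
    and below: "Suc s < length T \<Longrightarrow> j < length (T ! Suc s) \<Longrightarrow> v < T ! Suc s ! j"
  shows "is_ssyt N \<nu> (T[s := (T ! s)[j := v]])" (is "is_ssyt N \<nu> ?T'")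
proof (rule is_ssytI)
  have l: "length T = length \<nu>" by (rule ssyt_length[OF T])
  then show "length ?T' = length \<nu>" by simp
  fix t assume t: "t < length \<nu>"
  then show "length (?T' ! t) = \<nu> ! t"
    using ssyt_row_length[OF T] l by (cases "t = s") auto
  show "sorted (?T' ! t)" using t sorted ssyt_row_sorted[OF T] l by (cases "t = s") auto
  fix k assume "k < \<nu> ! t"
  then show "1 \<le> ?T' ! t ! k \<and> ?T' ! t ! k \<le> N + 1"
    using t v ssyt_entry_bounds[OF T] ssyt_row_length[OF T] l
    by (cases "t = s"; cases "k = j") auto
next
  have l: "length T = length \<nu>" by (rule ssyt_length[OF T])
  fix t k assume t: "Suc t < length \<nu>" and k: "k < \<nu> ! Suc t"
  then have col: "T ! t ! k < T ! Suc t ! k" and kl: "k < length (T ! Suc t)"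
    using ssyt_column_less[OF T] ssyt_row_length[OF T] l by auto
  consider "t = s" | "Suc t = s" | "t \<noteq> s" "Suc t \<noteq> s" by blast
  then show "?T' ! t ! k < ?T' ! Suc t ! k"
  proof cases
    case 1
    then show ?thesis using below col kl t l j by (cases "k = j") auto
  next
    case 2
    then show ?thesis using above col s j by (cases "k = j") (auto simp: nth_list_update)
  qed (use col in simp)
qed

text \<open>Letters \<open>i + 1\<close> of row \<open>s + 1\<close> below the last \<open>i\<close> of row \<open>s\<close> would force the row below
  to contain as many letters \<open>i + 1\<close> as row \<open>s\<close> has letters \<open>i\<close>.\<close>

lemma ssyt_entry_below_last:
  assumes T: "is_ssyt N \<nu> T" and ss: "Suc s < length T"
    and fewer: "count_list (T ! Suc s) (Suc i) < count_list (T ! s) i"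
    and j: "j = count_below (Suc i) (T ! s) - 1" and jl: "j < length (T ! Suc s)"
  shows "Suc i < T ! Suc s ! j"
proof (rule ccontr)
  assume "\<not> Suc i < T ! Suc s ! j"
  then have le: "T ! Suc s ! j \<le> Suc i" by simp
  define R where "R = T ! s"
  have sR: "sorted R" and sB: "sorted (T ! Suc s)"
    using ss ssyt_row_sorted[OF T] unfolding R_def by auto
  have "k < length (T ! Suc s) \<and> T ! Suc s ! k = Suc i"
    if k: "count_below i R \<le> k" "k < count_below i R + count_list R i" for k
  proof -
    have "k \<le> j" using k j unfolding R_def by (simp add: count_below_Suc)
    then have kl: "k < length (T ! Suc s)" using jl by simp
    have "R ! k = i" using sorted_nth_eq_between[OF sR, of i k] k by (simp add: count_below_Suc)
    then have "i < T ! Suc s ! k" using ssyt_column_less[OF T ss kl] unfolding R_def by simp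
    moreover have "T ! Suc s ! k \<le> T ! Suc s ! j" using sorted_nth_mono[OF sB \<open>k \<le> j\<close> jl] .
    ultimately show ?thesis using le kl by simp
  qed
  then have "count_list R i \<le> count_list (T ! Suc s) (Suc i)" by (rule count_list_ge)
  then show False using fewer unfolding R_def by simp
qed

lemma ssyt_entry_above_first:
  assumes p: "is_partition \<nu>" and T: "is_ssyt N \<nu> T" and ss: "Suc s < length T"
    and fewer: "count_list (T ! s) i < count_list (T ! Suc s) (Suc i)"
    and j: "j = count_below (Suc i) (T ! Suc s)"
  shows "T ! s ! j < i"
proof (rule ccontr)
  define R where "R = T ! Suc s"
  have sA: "sorted (T ! s)" and sR: "sorted R"
    using ss ssyt_row_sorted[OF T] unfolding R_def by auto
  have len: "length R \<le> length (T ! s)"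
    using ssyt_row_length_antimono[OF p T, of s "Suc s"] ss unfolding R_def by simp
  have Rk: "k < length R \<and> R ! k = Suc i" if "j \<le> k" "k < j + count_list R (Suc i)" for k
    using sorted_nth_eq_between[OF sR, of "Suc i" k] that j unfolding R_def
    by (simp add: count_below_Suc)
  assume "\<not> T ! s ! j < i"
  moreover have "0 < count_list R (Suc i)" using fewer unfolding R_def by simp
  then have "T ! s ! j < Suc i" using Rk[of j] ssyt_column_less[OF T ss] unfolding R_def by fastforce
  ultimately have eq: "T ! s ! j = i" by simp
  have "k < length (T ! s) \<and> T ! s ! k = i" if "j \<le> k" "k < j + count_list R (Suc i)" for k
  proof -
    have "T ! s ! k < R ! k" using ssyt_column_less[OF T ss, of k] Rk[OF that] unfolding R_def by simp
    moreover have "T ! s ! j \<le> T ! s ! k" using sorted_nth_mono[OF sA \<open>j \<le> k\<close>] Rk[OF that] len by simp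
    ultimately show ?thesis using Rk[OF that] eq len by simp
  qed
  then have "count_list R (Suc i) \<le> count_list (T ! s) i" by (rule count_list_ge)
  then show False using fewer unfolding R_def by simp
qed

lemma Fop_preserves_ssyt:
  assumes T: "is_ssyt N \<nu> T" and iN: "i \<le> N" and F: "Fop i T = Some T'"
  shows "is_ssyt N \<nu> T'"
proof -
  obtain s where active: "active_row i T s"
    and T': "T' = T[s := (T ! s)[count_below (Suc i) (T ! s) - 1 := Suc i]]"
    using Fop_SomeE[OF ssyt_sorted_rows[OF T] F] by metis
  define R where "R = T ! s"
  define j where "j = count_below (Suc i) R - 1"
  have s: "s < length T" and a: "0 < count_list R i"
    using active unfolding active_row_def R_def by auto
  have sR: "sorted R" using ssyt_row_sorted[OF T s] R_def by simp
  have "count_below i R \<le> j" "j < count_below (Suc i) R"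
    using a unfolding j_def by (auto simp: count_below_Suc)
  then have jl: "j < length R" and Rj: "R ! j = i"
    using sorted_nth_eq_between[OF sR] by auto
  have "sorted (R[j := Suc i])"
  proof (rule sorted_list_update[OF sR])
    show "R ! k \<le> Suc i" if "k < j" for k
      using sorted_nth_mono[OF sR, of k j] jl Rj that by simp
    show "Suc i \<le> R ! k" if "j < k" "k < length R" for k
      using sorted_nth_less_iff[OF sR that(2), of "Suc i"] that unfolding j_def by linarith
  qed
  moreover have "T ! (s - 1) ! j < Suc i" if "0 < s"
    using ssyt_column_less[OF T, of "s - 1" j] that s jl Rj unfolding R_def by simp
  moreover have "Suc i < T ! Suc s ! j" if ss: "Suc s < length T" "j < length (T ! Suc s)"
  proof (rule ssyt_entry_below_last[OF T ss(1) _ _ ss(2)])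
    have "depth_below i T (Suc s) =
        (depth_below i T (Suc (Suc s)) - count_list (T ! Suc s) i) + count_list (T ! Suc s) (Suc i)"
      using depth_below_row[OF ss(1)] bracket_depth_sorted ssyt_row_sorted[OF T ss(1)] by simp
    then show "count_list (T ! Suc s) (Suc i) < count_list (T ! s) i"
      using active unfolding active_row_def by simp
  qed (simp add: j_def R_def)
  ultimately have "is_ssyt N \<nu> (T[s := R[j := Suc i]])"
    using is_ssyt_update_entry[OF T s, of j "Suc i"] jl iN unfolding R_def by simp
  then show ?thesis unfolding T' R_def j_def .
qed

lemma sum_reading_word_Fop:
  assumes "Fop i T = Some T'"
  shows "sum_list (reading_word T') = Suc (sum_list (reading_word T))"
proof -
  obtain p where "p < length (reading_word T)" "reading_word T ! p = i"
    "reading_word T' = (reading_word T)[p := Suc i]"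
    using reading_word_Fop[OF assms] .
  then show ?thesis by (simp add: sum_list_update)
qed

lemma sum_reading_word_ssyt_le:
  assumes "is_ssyt N \<nu> T"
  shows "sum_list (reading_word T) \<le> sum_list \<nu> * (N + 1)"
proof -
  have "sum_list (map id (reading_word T)) \<le> sum_list (map (\<lambda>_. N + 1) (reading_word T))"
    using ssyt_reading_word_bounds[OF assms] by (intro sum_list_mono) simp
  then show ?thesis by (simp add: sum_list_triv length_reading_word_ssyt[OF assms])
qed

lemma Bstep_reading_word_le:
  assumes "Bstep N \<nu> X Y"
  shows "list_all2 (\<le>) (reading_word X) (reading_word Y)"
proof -
  obtain i where "Fop i X = Some Y" using assms unfolding Bstep_def by blast
  then obtain p where "p < length (reading_word X)" "reading_word X ! p = i"
    "reading_word Y = (reading_word X)[p := Suc i]" by (rule reading_word_Fop)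
  then show ?thesis by (auto simp: list_all2_conv_all_nth nth_list_update)
qed

lemma Ble_reading_word_le:
  "Ble N \<nu> X Y \<Longrightarrow> list_all2 (\<le>) (reading_word X) (reading_word Y)"
  unfolding Ble_def
proof (induction rule: rtranclp_induct)
  case base then show ?case by (simp add: list_all2_refl)
next
  case (step Y Z)
  then show ?case using Bstep_reading_word_le list_all2_trans[of "(\<le>)" "(\<le>)" "(\<le>)"]
    by (meson order_trans)
qed

lemma list_all2_le_between:
  assumes "list_all2 (\<le>) xs ys" "list_all2 (\<le>) ys zs"
    and "\<forall>x\<in>set xs. lo \<le> x" "\<forall>z\<in>set zs. z \<le> hi" and "y \<in> set ys"
  shows "lo \<le> y \<and> y \<le> (hi :: 'a :: order)"
proof -
  obtain q where q: "q < length ys" "y = ys ! q" using assms(5) by (auto simp: in_set_conv_nth)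
  then have "xs ! q \<le> y" "y \<le> zs ! q" "xs ! q \<in> set xs" "zs ! q \<in> set zs"
    using assms(1,2) by (auto simp: list_all2_conv_all_nth)
  then show ?thesis using assms(3,4) by (meson order_trans)
qed

section \<open>The minimal tableau\<close>

definition min_tableau :: "nat list \<Rightarrow> nat list list" where
  "min_tableau \<nu> = map (\<lambda>t. replicate (\<nu> ! t) (Suc t)) [0..<length \<nu>]"

lemma min_tableau_ssyt:
  assumes p: "is_partition \<nu>" and l: "length \<nu> \<le> N + 1"
  shows "is_ssyt N \<nu> (min_tableau \<nu>)"
proof (rule is_ssytI)
  fix t k assume "Suc t < length \<nu>" "k < \<nu> ! Suc t"
  moreover have "\<nu> ! Suc t \<le> \<nu> ! t"
    using partition_nth_antimono[OF p, of t "Suc t"] calculation by simp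
  ultimately show "min_tableau \<nu> ! t ! k < min_tableau \<nu> ! Suc t ! k"
    unfolding min_tableau_def by (simp del: upt_Suc)
qed (use l in \<open>auto simp: min_tableau_def\<close>)

lemma ssyt_eq_min_tableau:
  assumes U: "is_ssyt N \<nu> U" and rows: "\<And>t k. t < length U \<Longrightarrow> k < length (U ! t) \<Longrightarrow> U ! t ! k = Suc t"
  shows "U = min_tableau \<nu>"
proof (rule nth_equalityI)
  show "length U = length (min_tableau \<nu>)" using ssyt_length[OF U] by (simp add: min_tableau_def)
  fix t assume t: "t < length U"
  then show "U ! t = min_tableau \<nu> ! t"
    using rows ssyt_row_length[OF U t] ssyt_length[OF U]
    by (intro nth_equalityI) (auto simp: min_tableau_def)
qed

text \<open>Outside the minimal tableau there is an unmatched letter \<open>i + 1\<close>: take for \<open>i + 1\<close> the last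
  entry of the topmost row that is not constant equal to its index. The rows above contain
  only smaller letters.\<close>

lemma exists_unmatched_open:
  assumes p: "is_partition \<nu>" and U: "is_ssyt N \<nu> U" and ne: "U \<noteq> min_tableau \<nu>"
  obtains i where "1 \<le> i" "i \<le> N" "0 < depth_below i U 0"
proof -
  let ?Q = "\<lambda>r. r < length U \<and> (\<exists>k < length (U ! r). U ! r ! k \<noteq> Suc r)"
  have "\<exists>r. ?Q r" using ssyt_eq_min_tableau[OF U] ne by blast
  then obtain r where Qr: "?Q r" and above: "\<And>t. t < r \<Longrightarrow> \<not> ?Q t"
    using exists_least_iff[of ?Q] by blast
  obtain k where k: "k < length (U ! r)" "U ! r ! k \<noteq> Suc r" using Qr by blast
  define L where "L = length (U ! r) - 1"
  define i where "i = U ! r ! L - 1"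
  have r: "r < length U" and sr: "sorted (U ! r)" using Qr ssyt_row_sorted[OF U] by auto
  have "U ! r ! k \<le> U ! r ! L" unfolding L_def using sorted_nth_mono[OF sr, of k] k by simp
  moreover have "Suc r \<le> U ! r ! k" using ssyt_entry_ge_row[OF p U r k(1)] .
  moreover have "U ! r ! L \<le> N + 1" using ssyt_entry_bounds[OF U r, of L] k unfolding L_def by simp
  ultimately have i: "Suc r \<le> i" "i \<le> N" and last: "U ! r ! L = Suc i"
    using k unfolding i_def by auto
  have "\<forall>x\<in>set (reading_word (take r U)). x \<noteq> i \<and> x \<noteq> Suc i"
    using above i(1) by (fastforce simp: reading_word_def in_set_conv_nth)
  moreover have "reading_word U = reading_word (drop r U) @ reading_word (take r U)"
    by (metis append_take_drop_id reading_word_append)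
  ultimately have "depth_below i U 0 = depth_below i U r"
    using unmatched_closes_no_brackets by (simp add: depth_below_def bracket_depth_append)
  also have "\<dots> = (depth_below i U (Suc r) - count_list (U ! r) i) + count_list (U ! r) (Suc i)"
    using depth_below_row[OF r] bracket_depth_sorted[OF sr] by simp
  finally have "count_list (U ! r) (Suc i) \<le> depth_below i U 0" by simp
  moreover have "L < length (U ! r)" using k unfolding L_def by simp
  then have "Suc i \<in> set (U ! r)" using last nth_mem by metis
  then have "count_list (U ! r) (Suc i) \<noteq> 0" by (simp add: count_list_0_iff)
  ultimately show ?thesis using that[of i] i by simp
qed

lemma ssyt_lower_first_letter:
  assumes p: "is_partition \<nu>" and U: "is_ssyt N \<nu> U" and s: "s < length U" and i: "1 \<le> i"
    and b: "0 < count_list (U ! s) (Suc i)"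
    and fewer: "0 < s \<Longrightarrow> count_list (U ! (s - 1)) i < count_list (U ! s) (Suc i)"
  shows "is_ssyt N \<nu> (U[s := (U ! s)[count_below (Suc i) (U ! s) := i]])"
proof -
  define R where "R = U ! s"
  define j where "j = count_below (Suc i) R"
  have sR: "sorted R" using ssyt_row_sorted[OF U s] R_def by simp
  have jl: "j < length R" and Rj: "R ! j = Suc i"
    using sorted_nth_eq_between[OF sR, of "Suc i" j] b unfolding j_def R_def
    by (auto simp: count_below_Suc)
  have "sorted (R[j := i])"
  proof (rule sorted_list_update[OF sR])
    show "R ! k \<le> i" if "k < j" for k
      using sorted_nth_less_iff[OF sR _, of k "Suc i"] that jl unfolding j_def by simp
    show "i \<le> R ! k" if "j < k" "k < length R" for k
      using sorted_nth_mono[OF sR, of j k] that Rj by simp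
  qed
  moreover have "i \<le> N + 1" using ssyt_entry_bounds[OF U s, of j] jl Rj unfolding R_def by simp
  moreover have "U ! (s - 1) ! j < i" if "0 < s"
    using ssyt_entry_above_first[OF p U, of "s - 1" i j] that s fewer unfolding j_def R_def by simp
  moreover have "i < U ! Suc s ! j" if "Suc s < length U" "j < length (U ! Suc s)"
    using ssyt_column_less[OF U that] Rj unfolding R_def by simp
  ultimately show ?thesis
    using is_ssyt_update_entry[OF U s, of j i] jl i unfolding R_def j_def by simp
qed

lemma depth_below_decrease_above:
  assumes sorted: "\<forall>r\<in>set U. sorted r" and s: "s \<le> length U"
    and same: "\<And>t. t < s \<Longrightarrow> V ! t = U ! t"
    and base: "depth_below i V s = depth_below i U s - 1"
    and unmatched: "\<And>t. t < s \<Longrightarrow> count_list (U ! t) i < depth_below i U (Suc t)"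
    and lV: "length V = length U"
  shows "t \<le> s \<Longrightarrow> depth_below i V t = depth_below i U t - 1"
proof (induction rule: inc_induct)
  case (step t)
  then have t: "t < length U" and st: "sorted (U ! t)" using s sorted by auto
  show ?case
    using depth_below_row[OF t] depth_below_row[of t V] bracket_depth_sorted[OF st]
      same[OF step(2)] unmatched[OF step(2)] step.IH t lV by simp
qed (rule base)

text \<open>The topmost row whose letters \<open>i\<close> match all unmatched letters \<open>i + 1\<close> of the rows below.\<close>

lemma exists_closing_row:
  assumes sorted: "\<forall>r\<in>set U. sorted r" and pos: "0 < depth_below i U 0"
  obtains s where "s < length U" "depth_below i U (Suc s) \<le> count_list (U ! s) i"
    "\<And>t. t < s \<Longrightarrow> count_list (U ! t) i < depth_below i U (Suc t)"
    "depth_below i U s = count_list (U ! s) (Suc i)" "0 < count_list (U ! s) (Suc i)"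
proof -
  let ?P = "\<lambda>t. t < length U \<and> depth_below i U (Suc t) \<le> count_list (U ! t) i"
  have "0 < length U" using pos depth_below_beyond[of U 0] by (cases U) auto
  then have "?P (length U - 1)" by (simp add: depth_below_beyond)
  then obtain s where Ps: "?P s" and before: "\<And>t. t < s \<Longrightarrow> \<not> ?P t"
    using exists_least_iff[of ?P] by blast
  then have s: "s < length U" by simp
  have unmatched: "count_list (U ! t) i < depth_below i U (Suc t)" if "t < s" for t
    using before[OF that] that s by simp
  have "depth_below i U s = count_list (U ! s) (Suc i)"
    using depth_below_row[OF s] bracket_depth_sorted Ps s sorted by simp
  moreover have "0 < depth_below i U s" using pos unmatched[of "s - 1"] by (cases s) auto
  ultimately show ?thesis using that[OF s _ unmatched] Ps by simp
qed

text \<open>The preimage changes the first letter \<open>i + 1\<close> of the closing row into \<open>i\<close>.\<close>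

lemma Fop_preimage_exists:
  assumes p: "is_partition \<nu>" and U: "is_ssyt N \<nu> U" and i: "1 \<le> i"
    and pos: "0 < depth_below i U 0"
  obtains V where "is_ssyt N \<nu> V" "Fop i V = Some U"
proof -
  obtain s where s: "s < length U" and closes: "depth_below i U (Suc s) \<le> count_list (U ! s) i"
    and unmatched: "\<And>t. t < s \<Longrightarrow> count_list (U ! t) i < depth_below i U (Suc t)"
    and Ds: "depth_below i U s = count_list (U ! s) (Suc i)" and b: "0 < count_list (U ! s) (Suc i)"
    using exists_closing_row[OF ssyt_sorted_rows[OF U] pos] by metis
  define R where "R = U ! s"
  define j where "j = count_below (Suc i) R"
  define V where "V = U[s := R[j := i]]"
  have V: "is_ssyt N \<nu> V"
    using ssyt_lower_first_letter[OF p U s i b] unmatched[of "s - 1"] Ds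
    unfolding V_def R_def j_def by simp
  have sR: "sorted R" using ssyt_row_sorted[OF U s] R_def by simp
  have jl: "j < length R" and Rj: "R ! j = Suc i"
    using sorted_nth_eq_between[OF sR, of "Suc i" j] b unfolding j_def R_def
    by (auto simp: count_below_Suc)
  have cnt: "count_list (R[j := i]) i = Suc (count_list R i)"
    "count_list (R[j := i]) (Suc i) = count_list R (Suc i) - 1"
    "count_below (Suc i) (R[j := i]) = Suc j"
    using count_list_list_update[OF jl, where v = i and c = i]
      count_list_list_update[OF jl, where v = i and c = "Suc i"]
      count_below_list_update[OF jl, of "Suc i" i] Rj unfolding j_def by auto
  have Vs: "V ! s = R[j := i]" unfolding V_def using s by simp
  have below: "depth_below i V (Suc s) = depth_below i U (Suc s)"
    unfolding V_def depth_below_def by simp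
  have base: "depth_below i V s = depth_below i U s - 1"
    using depth_below_row[of s V] s Vs below bracket_depth_sorted[OF ssyt_row_sorted[OF V, of s]]
      cnt Ds closes unfolding V_def R_def by simp
  have same: "V ! t = U ! t" if "t < s" for t unfolding V_def using that by simp
  have "depth_below i V t = depth_below i U t - 1" if "t \<le> s" for t
    by (rule depth_below_decrease_above[OF ssyt_sorted_rows[OF U] _ same base unmatched _ that])
      (use s in \<open>simp_all add: V_def\<close>)
  then have "\<not> active_row i V t" if "t < s" for t
    using unmatched[OF that] that unfolding active_row_def V_def by auto
  moreover have "active_row i V s"
    unfolding active_row_def using below Vs cnt closes s unfolding V_def R_def by simp
  ultimately have "Fop i V = Some (V[s := (V ! s)[count_below (Suc i) (V ! s) - 1 := Suc i]])"
    using Fop_topmost_active_row[OF ssyt_sorted_rows[OF V]] by blast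
  also have "V[s := (V ! s)[count_below (Suc i) (V ! s) - 1 := Suc i]] = U"
    using Vs cnt Rj jl s unfolding V_def R_def by simp (metis list_update_id)
  finally show ?thesis using that V by blast
qed

lemma Ble_min_tableau:
  assumes p: "is_partition \<nu>" and U: "is_ssyt N \<nu> U"
  shows "Ble N \<nu> (min_tableau \<nu>) U"
  using U
proof (induction "sum_list (reading_word U)" arbitrary: U rule: less_induct)
  case less
  show ?case
  proof (cases "U = min_tableau \<nu>")
    case True then show ?thesis unfolding Ble_def by simp
  next
    case False
    obtain i where i: "1 \<le> i" "i \<le> N" "0 < depth_below i U 0"
      using exists_unmatched_open[OF p less.prems False] .
    obtain V where V: "is_ssyt N \<nu> V" "Fop i V = Some U"
      using Fop_preimage_exists[OF p less.prems i(1,3)] .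
    have "Ble N \<nu> (min_tableau \<nu>) V" using less.hyps V sum_reading_word_Fop[OF V(2)] by simp
    moreover have "Bstep N \<nu> V U" unfolding Bstep_def Btab_def using i V less.prems by auto
    ultimately show ?thesis unfolding Ble_def by (rule rtranclp.rtrancl_into_rtrancl)
  qed
qed

section \<open>The maximal tableau\<close>

definition col_height :: "nat list \<Rightarrow> nat \<Rightarrow> nat" where
  "col_height \<nu> k = length (filter (\<lambda>x. k < x) \<nu>)"

lemma col_height_iff:
  assumes "is_partition \<nu>"
  shows "t < col_height \<nu> k \<longleftrightarrow> t < length \<nu> \<and> k < \<nu> ! t"
proof -
  have "sorted_wrt (\<ge>) \<nu>" using assms unfolding is_partition_def by (simp add: sorted_wrt_rev)
  then show ?thesis unfolding col_height_def
  proof (induction \<nu> arbitrary: t)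
    case (Cons x xs)
    show ?case
    proof (cases "k < x")
      case True
      then show ?thesis using Cons by (cases t) auto
    next
      case False
      then have none: "\<forall>y\<in>set (x # xs). \<not> k < y" using Cons.prems by auto
      then have "\<not> (t < length (x # xs) \<and> k < (x # xs) ! t)" using nth_mem by blast
      with none show ?thesis by (simp add: filter_empty_conv)
    qed
  qed simp
qed

lemma col_height_le_length: "col_height \<nu> k \<le> length \<nu>"
  unfolding col_height_def by simp

lemma col_height_antimono: "k \<le> k' \<Longrightarrow> col_height \<nu> k' \<le> col_height \<nu> k"
proof -
  assume "k \<le> k'"
  then have "length (filter (\<lambda>x. k' < x) \<nu>) \<le> length (filter (\<lambda>x. k < x) \<nu>)"
    by (induction \<nu>) auto
  then show ?thesis unfolding col_height_def .
qed

text \<open>Each column of height \<open>h\<close> ends in \<open>N + 1\<close> and counts down by one per row, so its entry in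
  row \<open>t\<close> is \<open>N + 2 + t - h\<close>.\<close>

definition max_tableau :: "nat \<Rightarrow> nat list \<Rightarrow> nat list list" where
  "max_tableau N \<nu> = map (\<lambda>t. map (\<lambda>k. N + 2 + t - col_height \<nu> k) [0..<\<nu> ! t]) [0..<length \<nu>]"

lemma length_max_tableau [simp]: "length (max_tableau N \<nu>) = length \<nu>"
  unfolding max_tableau_def by simp

lemma length_max_tableau_row [simp]: "t < length \<nu> \<Longrightarrow> length (max_tableau N \<nu> ! t) = \<nu> ! t"
  unfolding max_tableau_def by simp

lemma max_tableau_nth:
  "t < length \<nu> \<Longrightarrow> k < \<nu> ! t \<Longrightarrow> max_tableau N \<nu> ! t ! k = N + 2 + t - col_height \<nu> k"
  unfolding max_tableau_def by simp

lemma max_tableau_column_Suc: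
  assumes p: "is_partition \<nu>" and l: "length \<nu> \<le> N + 1"
    and t: "Suc t < length \<nu>" and k: "k < \<nu> ! Suc t"
  shows "k < \<nu> ! t" "max_tableau N \<nu> ! Suc t ! k = Suc (max_tableau N \<nu> ! t ! k)"
proof -
  show k': "k < \<nu> ! t" using partition_nth_antimono[OF p, of t "Suc t"] t k by simp
  have "t < col_height \<nu> k" using col_height_iff[OF p] t k' by simp
  moreover have "col_height \<nu> k \<le> N + 1" using col_height_le_length[of \<nu> k] l by simp
  ultimately show "max_tableau N \<nu> ! Suc t ! k = Suc (max_tableau N \<nu> ! t ! k)"
    using max_tableau_nth[of t \<nu> k N] max_tableau_nth[of "Suc t" \<nu> k N] t k k' by simp
qed

lemma max_tableau_ssyt:
  assumes p: "is_partition \<nu>" and l: "length \<nu> \<le> N + 1"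
  shows "is_ssyt N \<nu> (max_tableau N \<nu>)"
proof (rule is_ssytI)
  fix t assume t: "t < length \<nu>"
  show "sorted (max_tableau N \<nu> ! t)"
    unfolding sorted_iff_nth_mono using t col_height_antimono
    by (simp add: max_tableau_nth diff_le_mono2)
  fix k assume k: "k < \<nu> ! t"
  have "t < col_height \<nu> k" using col_height_iff[OF p] t k by simp
  moreover have "col_height \<nu> k \<le> N + 1" using col_height_le_length[of \<nu> k] l by simp
  ultimately show "1 \<le> max_tableau N \<nu> ! t ! k \<and> max_tableau N \<nu> ! t ! k \<le> N + 1"
    using t k by (auto simp: max_tableau_nth)
qed (use max_tableau_column_Suc[OF assms] in simp_all)

lemma ssyt_le_max_tableau:
  assumes p: "is_partition \<nu>" and U: "is_ssyt N \<nu> U" and t: "t < length \<nu>" and k: "k < \<nu> ! t"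
  shows "U ! t ! k \<le> max_tableau N \<nu> ! t ! k"
proof -
  define h where "h = col_height \<nu> k"
  have th: "t < h" using col_height_iff[OF p] t k h_def by simp
  have lU: "length U = length \<nu>" using ssyt_length[OF U] .
  have "U ! t' ! k + (h - 1 - t') \<le> N + 1" if "t \<le> t'" "t' \<le> h - 1" for t'
    using that(2,1)
  proof (induction rule: inc_induct)
    case base
    have "h - 1 < length \<nu>" "k < \<nu> ! (h - 1)"
      using col_height_iff[OF p, of "h - 1" k] th h_def by auto
    then show ?case using ssyt_entry_bounds[OF U, of "h - 1" k] lU ssyt_row_length[OF U] by simp
  next
    case (step t')
    have "Suc t' < length U" and "k < length (U ! Suc t')"
      using col_height_iff[OF p, of "Suc t'" k] step(2) h_def lU ssyt_row_length[OF U] by auto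
    then have "U ! t' ! k < U ! Suc t' ! k" by (rule ssyt_column_less[OF U])
    moreover have "U ! Suc t' ! k + (h - 1 - Suc t') \<le> N + 1" using step by simp
    ultimately show ?case using step(2) by linarith
  qed
  then have "U ! t ! k + (h - 1 - t) \<le> N + 1" using th by simp
  then show ?thesis using th t k unfolding h_def by (simp add: max_tableau_nth)
qed

lemma max_tableau_count_le:
  assumes p: "is_partition \<nu>" and l: "length \<nu> \<le> N + 1" and t: "Suc t < length \<nu>"
  shows "count_list (max_tableau N \<nu> ! Suc t) (Suc i) \<le> count_list (max_tableau N \<nu> ! t) i"
proof -
  let ?W = "max_tableau N \<nu>"
  have "{k. k < length (?W ! Suc t) \<and> ?W ! Suc t ! k = Suc i}
      \<subseteq> {k. k < length (?W ! t) \<and> ?W ! t ! k = i}"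
    using max_tableau_column_Suc[OF p l t] t by auto
  then show ?thesis unfolding count_list_eq_card by (intro card_mono) auto
qed

text \<open>Below the last row where a tableau differs from the maximal one, every letter \<open>i + 1\<close> of a
  row is matched by a letter \<open>i\<close> of the row above.\<close>

lemma depth_below_max_rows:
  assumes p: "is_partition \<nu>" and l: "length \<nu> \<le> N + 1" and U: "is_ssyt N \<nu> U"
    and max: "\<And>t. r < t \<Longrightarrow> t < length \<nu> \<Longrightarrow> U ! t = max_tableau N \<nu> ! t"
  shows "t \<le> length U \<Longrightarrow> Suc r \<le> t \<Longrightarrow>
    depth_below i U t = (if t < length U then count_list (U ! t) (Suc i) else 0)"
proof (induction rule: inc_induct)
  case base then show ?case by (simp add: depth_below_beyond)
next
  case (step t)
  have t: "t < length U" and st: "sorted (U ! t)" using step ssyt_row_sorted[OF U] by auto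
  have r: "r < t" using step.prems by simp
  have "depth_below i U (Suc t) \<le> count_list (U ! t) i"
  proof (cases "Suc t < length U")
    case True
    then have "depth_below i U (Suc t) = count_list (U ! Suc t) (Suc i)" using step.IH r by simp
    also have "\<dots> \<le> count_list (U ! t) i"
      using max_tableau_count_le[OF p l, of t i] max[of t] max[of "Suc t"] r True ssyt_length[OF U]
      by simp
    finally show ?thesis .
  qed (use step.IH r in simp)
  then show ?case using depth_below_row[OF t] bracket_depth_sorted[OF st] t by simp
qed

lemma last_difference_from_max_tableau:
  assumes p: "is_partition \<nu>" and U: "is_ssyt N \<nu> U" and ne: "U \<noteq> max_tableau N \<nu>"
  obtains r j where "r < length \<nu>" "j < \<nu> ! r" "U ! r ! j < max_tableau N \<nu> ! r ! j"
    "\<And>k. k < j \<Longrightarrow> U ! r ! k = max_tableau N \<nu> ! r ! k"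
    "\<And>t. r < t \<Longrightarrow> t < length \<nu> \<Longrightarrow> U ! t = max_tableau N \<nu> ! t"
proof -
  let ?W = "max_tableau N \<nu>"
  have lU: "length U = length \<nu>" and rlU: "\<And>t. t < length \<nu> \<Longrightarrow> length (U ! t) = \<nu> ! t"
    using ssyt_length[OF U] ssyt_row_length[OF U] by auto
  let ?Q = "\<lambda>r. r < length \<nu> \<and> (\<exists>k < \<nu> ! r. U ! r ! k \<noteq> ?W ! r ! k)"
  have differ: "\<exists>r. ?Q r"
  proof (rule ccontr)
    assume "\<not> (\<exists>r. ?Q r)"
    then have "U = ?W" by (intro nth_equalityI) (auto simp: lU rlU intro!: nth_equalityI)
    with ne show False by simp
  qed
  define r where "r = Max {r. ?Q r}"
  have fin: "finite {r. ?Q r}" by (rule finite_subset[of _ "{..<length \<nu>}"]) auto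
  have Qr: "?Q r" unfolding r_def using Max_in[OF fin] differ by auto
  have below: "U ! t = ?W ! t" if rt: "r < t" and t: "t < length \<nu>" for t
  proof (rule nth_equalityI)
    show "length (U ! t) = length (?W ! t)" using rlU t by simp
    show "U ! t ! k = ?W ! t ! k" if k: "k < length (U ! t)" for k
    proof (rule ccontr)
      assume "U ! t ! k \<noteq> ?W ! t ! k"
      then have "?Q t" using k rlU t by auto
      then have "t \<le> r" unfolding r_def using Max_ge[OF fin] by blast
      with rt show False by simp
    qed
  qed
  obtain j where j: "j < \<nu> ! r" "U ! r ! j \<noteq> ?W ! r ! j"
    and first: "\<forall>k<j. \<not> (k < \<nu> ! r \<and> U ! r ! k \<noteq> ?W ! r ! k)"
    using Qr exists_least_iff[of "\<lambda>k. k < \<nu> ! r \<and> U ! r ! k \<noteq> ?W ! r ! k"] by blast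
  moreover have "U ! r ! j < ?W ! r ! j" using ssyt_le_max_tableau[OF p U _ j(1)] Qr j(2) by fastforce
  ultimately show ?thesis using that Qr below by auto
qed

text \<open>Let \<open>i\<close> be the leftmost entry of the lowest row \<open>r\<close> in which a tableau differs from the maximal
  one. The letters \<open>i + 1\<close> of row \<open>r + 1\<close> sit below letters \<open>i\<close> strictly to the left of that entry,
  so row \<open>r\<close> has an unmatched letter \<open>i\<close>.\<close>

lemma exists_active_row:
  assumes p: "is_partition \<nu>" and l: "length \<nu> \<le> N + 1" and U: "is_ssyt N \<nu> U"
    and ne: "U \<noteq> max_tableau N \<nu>"
  obtains i r where "1 \<le> i" "i \<le> N" "active_row i U r"
proof -
  let ?W = "max_tableau N \<nu>"
  obtain r j where r: "r < length \<nu>" and j: "j < \<nu> ! r" "U ! r ! j < ?W ! r ! j"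
    and left: "\<And>k. k < j \<Longrightarrow> U ! r ! k = ?W ! r ! k"
    and below: "\<And>t. r < t \<Longrightarrow> t < length \<nu> \<Longrightarrow> U ! t = ?W ! t"
    using last_difference_from_max_tableau[OF p U ne] by metis
  have lU: "length U = length \<nu>" and rlU: "\<And>t. t < length \<nu> \<Longrightarrow> length (U ! t) = \<nu> ! t"
    using ssyt_length[OF U] ssyt_row_length[OF U] by auto
  define i where "i = U ! r ! j"
  have "?W ! r ! j \<le> N + 1" using ssyt_entry_bounds[OF max_tableau_ssyt[OF p l], of r j] r j by simp
  moreover have "1 \<le> i" using ssyt_entry_bounds[OF U, of r j] r j lU rlU unfolding i_def by simp
  ultimately have i: "1 \<le> i" "i \<le> N" using j(2) unfolding i_def by auto
  have matched: "{k. k < length (U ! Suc r) \<and> U ! Suc r ! k = Suc i} \<subseteq> {k. k < j \<and> U ! r ! k = i}"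
    if sr: "Suc r < length \<nu>"
  proof (intro subsetI CollectI)
    fix k assume "k \<in> {k. k < length (U ! Suc r) \<and> U ! Suc r ! k = Suc i}"
    then have k: "k < \<nu> ! Suc r" and "U ! Suc r ! k = Suc i" using rlU sr by auto
    then have Wk: "?W ! r ! k = i"
      using max_tableau_column_Suc[OF p l sr k] below[of "Suc r"] sr by simp
    have "\<not> j \<le> k"
    proof
      assume "j \<le> k"
      then have "?W ! r ! j \<le> ?W ! r ! k"
        using sorted_nth_mono[OF ssyt_row_sorted[OF max_tableau_ssyt[OF p l]], of r j k]
          max_tableau_column_Suc(1)[OF p l sr k] r by simp
      then show False using Wk j(2) unfolding i_def by simp
    qed
    then show "k < j \<and> U ! r ! k = i" using left Wk by simp
  qed
  have "insert j {k. k < j \<and> U ! r ! k = i} \<subseteq> {k. k < length (U ! r) \<and> U ! r ! k = i}"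
    using j rlU r unfolding i_def by auto
  then have "card (insert j {k. k < j \<and> U ! r ! k = i}) \<le> count_list (U ! r) i"
    unfolding count_list_eq_card by (intro card_mono) auto
  then have lt: "card {k. k < j \<and> U ! r ! k = i} < count_list (U ! r) i" by simp
  have "(if Suc r < length U then count_list (U ! Suc r) (Suc i) else 0) < count_list (U ! r) i"
  proof (cases "Suc r < length U")
    case True
    with matched have "count_list (U ! Suc r) (Suc i) \<le> card {k. k < j \<and> U ! r ! k = i}"
      unfolding count_list_eq_card by (intro card_mono) (auto simp: lU)
    with True lt show ?thesis by simp
  qed (use lt in simp)
  then have "active_row i U r"
    unfolding active_row_def
    using depth_below_max_rows[OF p l U below, where t = "Suc r" and i = i] r lU
    by simp
  then show ?thesis using that i by blast
qed

lemma Ble_max_tableau: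
  assumes p: "is_partition \<nu>" and l: "length \<nu> \<le> N + 1" and U: "is_ssyt N \<nu> U"
  shows "Ble N \<nu> U (max_tableau N \<nu>)"
  using U
proof (induction "sum_list \<nu> * (N + 1) - sum_list (reading_word U)" arbitrary: U rule: less_induct)
  case less
  show ?case
  proof (cases "U = max_tableau N \<nu>")
    case True then show ?thesis unfolding Ble_def by simp
  next
    case False
    obtain i r where i: "1 \<le> i" "i \<le> N" "active_row i U r"
      using exists_active_row[OF p l less.prems False] .
    then obtain U' where U': "Fop i U = Some U'"
      using Fop_eq_None_iff[OF ssyt_sorted_rows[OF less.prems]] by fastforce
    have U'S: "is_ssyt N \<nu> U'" using Fop_preserves_ssyt[OF less.prems i(2) U'] .
    have "Ble N \<nu> U' (max_tableau N \<nu>)"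
      using less.hyps[OF _ U'S] sum_reading_word_Fop[OF U'] sum_reading_word_ssyt_le[OF U'S] by simp
    moreover have "Bstep N \<nu> U U'" unfolding Bstep_def Btab_def using i U' U'S less.prems by auto
    ultimately show ?thesis unfolding Ble_def by (metis converse_rtranclp_into_rtranclp)
  qed
qed

lemma ssyt_take: "is_ssyt N \<nu> T \<Longrightarrow> is_ssyt N (take c \<nu>) (take c T)"
  unfolding is_ssyt_def by (auto dest: in_set_takeD)

lemma ssyt_drop: "is_ssyt N \<nu> T \<Longrightarrow> is_ssyt N (drop c \<nu>) (drop c T)"
proof (rule is_ssytI)
  assume T: "is_ssyt N \<nu> T"
  note l = ssyt_length[OF T]
  show "length (drop c T) = length (drop c \<nu>)" using l by simp
  fix t assume t: "t < length (drop c \<nu>)"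
  then show "length (drop c T ! t) = drop c \<nu> ! t" "sorted (drop c T ! t)"
    using ssyt_row_length[OF T] ssyt_row_sorted[OF T] l by auto
  show "1 \<le> drop c T ! t ! k \<and> drop c T ! t ! k \<le> N + 1" if "k < drop c \<nu> ! t" for k
    using ssyt_entry_bounds[OF T, of "c + t" k] ssyt_row_length[OF T, of "c + t"] that t l by simp
next
  fix t k assume T: "is_ssyt N \<nu> T" and "Suc t < length (drop c \<nu>)" "k < drop c \<nu> ! Suc t"
  then show "drop c T ! t ! k < drop c T ! Suc t ! k"
    using ssyt_column_less[OF T, of "c + t" k] ssyt_row_length[OF T, of "Suc (c + t)"]
      ssyt_length[OF T]
    by simp
qed

lemma ssyt_mono: "N \<le> N' \<Longrightarrow> is_ssyt N \<nu> T \<Longrightarrow> is_ssyt N' \<nu> T"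
  unfolding is_ssyt_def by fastforce

lemma ssyt_shift:
  assumes p: "is_partition \<nu>" and T: "is_ssyt N \<nu> T"
  shows "is_ssyt (N + c) \<nu> (map (map (\<lambda>x. x + c)) T)"
proof (rule is_ssytI)
  note l = ssyt_length[OF T]
  show "length (map (map (\<lambda>x. x + c)) T) = length \<nu>" using l by simp
  fix t assume t: "t < length \<nu>"
  then show "length (map (map (\<lambda>x. x + c)) T ! t) = \<nu> ! t" "sorted (map (map (\<lambda>x. x + c)) T ! t)"
    using ssyt_row_length[OF T] ssyt_row_sorted[OF T] l by (auto simp: sorted_map)
  show "1 \<le> map (map (\<lambda>x. x + c)) T ! t ! k \<and> map (map (\<lambda>x. x + c)) T ! t ! k \<le> N + c + 1"
    if "k < \<nu> ! t" for k
    using ssyt_entry_bounds[OF T, of t k] ssyt_row_length[OF T, of t] that t l by simp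
next
  fix t k assume t: "Suc t < length \<nu>" and k: "k < \<nu> ! Suc t"
  moreover have "\<nu> ! Suc t \<le> \<nu> ! t" using partition_nth_antimono[OF p, of t "Suc t"] t by simp
  ultimately show "map (map (\<lambda>x. x + c)) T ! t ! k < map (map (\<lambda>x. x + c)) T ! Suc t ! k"
    using ssyt_column_less[OF T, of t k] ssyt_row_length[OF T] ssyt_length[OF T] by simp
qed

lemma ssyt_unshift:
  assumes p: "is_partition \<nu>" and T: "is_ssyt N' \<nu> T"
    and bounds: "\<forall>r\<in>set T. \<forall>x\<in>set r. c < x \<and> x \<le> N + 1 + c"
  shows "is_ssyt N \<nu> (map (map (\<lambda>x. x - c)) T)" "map (map (\<lambda>x. x + c)) (map (map (\<lambda>x. x - c)) T) = T"
proof -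
  show "map (map (\<lambda>x. x + c)) (map (map (\<lambda>x. x - c)) T) = T"
    unfolding map_map comp_def using bounds
    by (intro map_idI) (meson le_add_diff_inverse2 less_imp_le)
  note l = ssyt_length[OF T]
  have entry: "c < T ! t ! k \<and> T ! t ! k \<le> N + 1 + c" if "t < length \<nu>" "k < \<nu> ! t" for t k
    using bounds that ssyt_row_length[OF T, of t] l by (metis nth_mem)
  show "is_ssyt N \<nu> (map (map (\<lambda>x. x - c)) T)"
  proof (rule is_ssytI)
    show "length (map (map (\<lambda>x. x - c)) T) = length \<nu>" using l by simp
    fix t assume t: "t < length \<nu>"
    then show "length (map (map (\<lambda>x. x - c)) T ! t) = \<nu> ! t" "sorted (map (map (\<lambda>x. x - c)) T ! t)"
      using ssyt_row_length[OF T] ssyt_row_sorted[OF T] l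
      by (auto simp: sorted_map intro: sorted_wrt_mono_rel[of _ "(\<le>)"] diff_le_mono)
    show "1 \<le> map (map (\<lambda>x. x - c)) T ! t ! k \<and> map (map (\<lambda>x. x - c)) T ! t ! k \<le> N + 1"
      if "k < \<nu> ! t" for k
      using entry[OF t that] ssyt_row_length[OF T, of t] that t l by auto
  next
    fix t k assume t: "Suc t < length \<nu>" and k: "k < \<nu> ! Suc t"
    moreover have "\<nu> ! Suc t \<le> \<nu> ! t" using partition_nth_antimono[OF p, of t "Suc t"] t by simp
    moreover have "T ! t ! k < T ! Suc t ! k"
      using ssyt_column_less[OF T, of t k] ssyt_row_length[OF T] l t k by simp
    ultimately show "map (map (\<lambda>x. x - c)) T ! t ! k < map (map (\<lambda>x. x - c)) T ! Suc t ! k"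
      using entry[of t k] ssyt_row_length[OF T] l by (simp add: diff_less_mono less_imp_le)
  qed
qed

lemma is_ssyt_append:
  assumes A: "is_ssyt N \<nu>\<^sub>1 A" and B: "is_ssyt N \<nu>\<^sub>2 B"
    and joint: "\<And>k. A \<noteq> [] \<Longrightarrow> B \<noteq> [] \<Longrightarrow> k < length (hd B) \<Longrightarrow> last A ! k < hd B ! k"
  shows "is_ssyt N (\<nu>\<^sub>1 @ \<nu>\<^sub>2) (A @ B)"
proof -
  have lA: "length A = length \<nu>\<^sub>1" and lB: "length B = length \<nu>\<^sub>2"
    using ssyt_length[OF A] ssyt_length[OF B] .
  have col: "(A @ B) ! t ! k < (A @ B) ! Suc t ! k"
    if "Suc t < length (A @ B)" "k < length ((A @ B) ! Suc t)" for t k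
  proof -
    consider "Suc t < length A" | "Suc t = length A" | "length A \<le> t" by linarith
    then show ?thesis
    proof cases
      case 1 then show ?thesis using that ssyt_column_less[OF A, of t k] by (simp add: nth_append)
    next
      case 2
      then have "last A = A ! t" by (metis diff_Suc_1 last_conv_nth list.size(3) nat.distinct(1))
      moreover have "B \<noteq> []" using 2 that by auto
      moreover from this have "hd B = B ! 0" by (simp add: hd_conv_nth)
      ultimately show ?thesis using 2 that joint[of k] by (force simp: nth_append)
    next
      case 3
      then have "Suc (t - length A) = Suc t - length A" by simp
      then show ?thesis
        using 3 that ssyt_column_less[OF B, of "t - length A" k] by (simp add: nth_append)
    qed
  qed
  show ?thesis
    using A B lA lB col unfolding is_ssyt_def by (auto simp: nth_append)
qed

lemma rtranclp_map:
  assumes "r\<^sup>*\<^sup>* x y" and "\<And>x y. r x y \<Longrightarrow> r' (h x) (h y)"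
  shows "r'\<^sup>*\<^sup>* (h x) (h y)"
  using assms(1)
proof (induction rule: rtranclp_induct)
  case (step y z) then show ?case using assms(2) by (meson rtranclp.rtrancl_into_rtrancl)
qed simp

lemma is_lattice_interval:
  assumes L: "is_lattice A le" and S: "S \<in> A" and T: "T \<in> A" and trans: "transp le"
  shows "is_lattice (interval A le S T) le"
  unfolding is_lattice_def
proof (intro ballI conjI)
  fix x y assume "x \<in> interval A le S T" "y \<in> interval A le S T"
  then have x: "x \<in> A" "le S x" "le x T" and y: "y \<in> A" "le S y" "le y T"
    unfolding interval_def by auto
  obtain j where j: "j \<in> A" "le x j" "le y j" "\<forall>z\<in>A. le x z \<and> le y z \<longrightarrow> le j z"
    using L x y unfolding is_lattice_def by blast
  have "le j T" using j(4) T x(3) y(3) by blast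
  moreover have "le S j" using transpD[OF trans x(2) j(2)] .
  ultimately have "j \<in> interval A le S T" using j(1) unfolding interval_def by simp
  then show "\<exists>j\<in>interval A le S T. le x j \<and> le y j \<and> (\<forall>z\<in>interval A le S T. le x z \<and> le y z \<longrightarrow> le j z)"
    using j unfolding interval_def by blast
  obtain m where m: "m \<in> A" "le m x" "le m y" "\<forall>z\<in>A. le z x \<and> le z y \<longrightarrow> le z m"
    using L x y unfolding is_lattice_def by blast
  have "le S m" using m(4) S x(2) y(2) by blast
  moreover have "le m T" using transpD[OF trans m(2) x(3)] .
  ultimately have "m \<in> interval A le S T" using m(1) unfolding interval_def by simp
  then show "\<exists>m\<in>interval A le S T. le m x \<and> le m y \<and> (\<forall>z\<in>interval A le S T. le z x \<and> le z y \<longrightarrow> le z m)"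
    using m unfolding interval_def by blast
qed

lemma poset_iso_is_lattice:
  assumes "poset_iso A leA C leC" and L: "is_lattice C leC"
  shows "is_lattice A leA"
proof -
  obtain h where bij: "bij_betw h A C" and ord: "\<forall>x\<in>A. \<forall>y\<in>A. leA x y \<longleftrightarrow> leC (h x) (h y)"
    using assms(1) unfolding poset_iso_def by blast
  have img: "h ` A = C" using bij by (simp add: bij_betw_def)
  show ?thesis unfolding is_lattice_def
  proof (intro ballI conjI)
    fix x y assume x: "x \<in> A" and y: "y \<in> A"
    have hx: "h x \<in> C" and hy: "h y \<in> C" using x y img by auto
    obtain j where j: "j \<in> C" "leC (h x) j" "leC (h y) j" "\<forall>z\<in>C. leC (h x) z \<and> leC (h y) z \<longrightarrow> leC j z"
      using L hx hy unfolding is_lattice_def by blast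
    obtain j0 where "j0 \<in> A" "j = h j0" using j(1) img by auto
    then show "\<exists>j\<in>A. leA x j \<and> leA y j \<and> (\<forall>z\<in>A. leA x z \<and> leA y z \<longrightarrow> leA j z)"
      using j ord x y img by (metis image_eqI)
    obtain m where m: "m \<in> C" "leC m (h x)" "leC m (h y)" "\<forall>z\<in>C. leC z (h x) \<and> leC z (h y) \<longrightarrow> leC z m"
      using L hx hy unfolding is_lattice_def by blast
    obtain m0 where "m0 \<in> A" "m = h m0" using m(1) img by auto
    then show "\<exists>m\<in>A. leA m x \<and> leA m y \<and> (\<forall>z\<in>A. leA z x \<and> leA z y \<longrightarrow> leA z m)"
      using m ord x y img by (metis image_eqI)
  qed
qed

section \<open>A block of rows as an interval\<close>

text \<open>Rows are numbered from \<open>0\<close>, so the block consists of the rows \<open>c = a - 1, \<dots>, b - 1\<close>,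
  and \<open>M\<close> is the paper's \<open>n - \<ell> + m\<close>.\<close>

locale row_block =
  fixes lam :: "nat list" and c b n :: nat
  assumes partition: "is_partition lam" and c_less_b: "c < b"
    and b_le_length: "b \<le> length lam" and length_le: "length lam \<le> n"
begin

definition mu :: "nat list" where "mu = drop c (take b lam)"

definition M :: nat where "M = n - length lam + (b - c)"

definition top_rows :: "nat list list" where "top_rows = take c (min_tableau lam)"

definition bottom_rows :: "nat list list" where "bottom_rows = drop b (max_tableau n lam)"

definition embed :: "nat list list \<Rightarrow> nat list list" where
  "embed U = top_rows @ map (map (\<lambda>x. x + c)) U @ bottom_rows"

lemma length_mu: "length mu = b - c"
  unfolding mu_def using b_le_length by simp

lemma M_add_c: "M + c = n - length lam + b"
  unfolding M_def using c_less_b by simp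

lemma lam_split: "lam = take c lam @ mu @ drop b lam"
  unfolding mu_def using c_less_b
  by (metis append.assoc append_take_drop_id less_imp_le_nat take_take min_def)

lemma mu_partition: "is_partition mu"
  unfolding is_partition_def
proof
  show "sorted (rev mu)" unfolding sorted_rev_iff_nth_mono
    using partition_nth_antimono[OF partition] b_le_length by (simp add: mu_def)
  show "\<forall>x\<in>set mu. 0 < x" using partition unfolding is_partition_def mu_def
    by (meson in_set_dropD in_set_takeD)
qed

lemma length_mu_le: "length mu \<le> M + 1"
  using length_mu length_le unfolding M_def by simp

lemma min_mu_ssyt: "is_ssyt M mu (min_tableau mu)"
  by (rule min_tableau_ssyt[OF mu_partition length_mu_le])

lemma max_mu_ssyt: "is_ssyt M mu (max_tableau M mu)"
  by (rule max_tableau_ssyt[OF mu_partition length_mu_le])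

lemma top_rows_ssyt: "is_ssyt n (take c lam) top_rows"
  unfolding top_rows_def using length_le by (intro ssyt_take min_tableau_ssyt[OF partition]) simp

lemma bottom_rows_ssyt: "is_ssyt n (drop b lam) bottom_rows"
  unfolding bottom_rows_def using length_le by (intro ssyt_drop max_tableau_ssyt[OF partition]) simp

lemma M_add_c_le: "M + c \<le> n"
  using M_add_c b_le_length length_le by simp

lemma top_letters: "x \<in> set (reading_word top_rows) \<Longrightarrow> x \<le> c"
  unfolding top_rows_def min_tableau_def reading_word_def
  using c_less_b b_le_length by (auto simp: take_map)

lemma bottom_letters:
  assumes "x \<in> set (reading_word bottom_rows)"
  shows "M + c + 2 \<le> x"
proof -
  obtain t k where t: "b \<le> t" "t < length lam" and k: "k < lam ! t"
    and x: "x = max_tableau n lam ! t ! k"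
    using assms unfolding bottom_rows_def reading_word_def
    by (auto simp: in_set_conv_nth) (metis add.commute le_add2 less_diff_conv)
  then show ?thesis
    using col_height_le_length[of lam k] M_add_c length_le by (simp add: max_tableau_nth)
qed

lemma embed_ssyt:
  assumes U: "is_ssyt M mu U"
  shows "is_ssyt n lam (embed U)"
proof -
  let ?U = "map (map (\<lambda>x. x + c)) U"
  have lU: "length U = b - c" using ssyt_length[OF U] length_mu by simp
  then have "U \<noteq> []" using c_less_b by auto
  then have last: "last ?U = map (\<lambda>x. x + c) (U ! (b - c - 1))"
    and hd: "hd (?U @ bottom_rows) = map (\<lambda>x. x + c) (U ! 0)"
    using lU c_less_b by (simp_all add: last_conv_nth hd_conv_nth nth_append)
  have mid: "is_ssyt n mu ?U"
    using ssyt_mono[OF M_add_c_le ssyt_shift[OF mu_partition U]] by simp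
  have "is_ssyt n (mu @ drop b lam) (?U @ bottom_rows)"
  proof (rule is_ssyt_append[OF mid bottom_rows_ssyt])
    fix k assume "?U \<noteq> []" "bottom_rows \<noteq> []" and k: "k < length (hd bottom_rows)"
    have b: "b < length lam" using \<open>bottom_rows \<noteq> []\<close> unfolding bottom_rows_def by simp
    then have "k < lam ! b" using k unfolding bottom_rows_def by (simp add: hd_drop_conv_nth)
    also have "lam ! b \<le> lam ! (b - 1)"
      using partition_nth_antimono[OF partition, of "b - 1" b] b by simp
    also have "lam ! (b - 1) = length (U ! (b - c - 1))"
      using ssyt_row_length[OF U, of "b - c - 1"] lU c_less_b b_le_length by (simp add: mu_def)
    finally have "last ?U ! k \<le> M + 1 + c"
      using ssyt_entry_bounds[OF U, of "b - c - 1" k] lU c_less_b unfolding last by simp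
    moreover have "hd bottom_rows ! k \<in> set (reading_word bottom_rows)"
      using \<open>bottom_rows \<noteq> []\<close> k unfolding reading_word_def
      by (auto intro!: bexI[of _ "hd bottom_rows"])
    ultimately show "last ?U ! k < hd bottom_rows ! k" using bottom_letters by fastforce
  qed
  moreover have "last top_rows ! k < hd (?U @ bottom_rows) ! k"
    if "top_rows \<noteq> []" "k < length (hd (?U @ bottom_rows))" for k
  proof -
    have "0 < c" "c \<le> length lam" using that c_less_b b_le_length unfolding top_rows_def by auto
    then have "last top_rows = replicate (lam ! (c - 1)) c"
      unfolding top_rows_def min_tableau_def by (simp add: last_conv_nth take_map)
    moreover have "k < length (U ! 0)" using that(2) unfolding hd by simp
    moreover have "1 \<le> U ! 0 ! k"
      using ssyt_entry_bounds[OF U, of 0 k] lU c_less_b calculation by simp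
    moreover have "k < lam ! (c - 1)"
      using \<open>k < length (U ! 0)\<close> ssyt_row_length[OF U, of 0] lU c_less_b b_le_length \<open>0 < c\<close>
        partition_nth_antimono[OF partition, of "c - 1" c] by (simp add: mu_def)
    ultimately show ?thesis using that hd by simp
  qed
  ultimately have "is_ssyt n (take c lam @ mu @ drop b lam) (embed U)"
    unfolding embed_def using is_ssyt_append[OF top_rows_ssyt] by blast
  then show ?thesis using lam_split by simp
qed

lemma inj_embed: "inj embed"
proof (rule injI)
  fix U V assume "embed U = embed V"
  then have "map (map (\<lambda>x. x + c)) U = map (map (\<lambda>x. x + c)) V" unfolding embed_def by simp
  moreover have "inj (map (\<lambda>x::nat. x + c))" by (intro inj_mapI) (simp add: inj_def)
  ultimately show "U = V" by (simp add: inj_map_eq_map)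
qed

lemma reading_word_embed:
  "reading_word (embed U) =
     reading_word bottom_rows @ map (\<lambda>x. x + c) (reading_word U) @ reading_word top_rows"
  unfolding embed_def by (simp add: reading_word_append reading_word_map)

lemma refill_embed:
  assumes "length w = length (reading_word U)"
  shows "refill (embed U) (reading_word bottom_rows @ map (\<lambda>x. x + c) w @ reading_word top_rows)
    = embed (refill U w)"
proof -
  have "refill (map (map (\<lambda>x. x + c)) U @ bottom_rows) (reading_word bottom_rows @ map (\<lambda>x. x + c) w)
      = map (map (\<lambda>x. x + c)) (refill U w) @ bottom_rows"
    using assms by (simp add: refill_append refill_map refill_reading_word reading_word_map)
  moreover have "refill (top_rows @ (map (map (\<lambda>x. x + c)) U @ bottom_rows))
      ((reading_word bottom_rows @ map (\<lambda>x. x + c) w) @ reading_word top_rows)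
    = refill top_rows (reading_word top_rows) @
      refill (map (map (\<lambda>x. x + c)) U @ bottom_rows) (reading_word bottom_rows @ map (\<lambda>x. x + c) w)"
    using assms by (intro refill_append) (simp_all add: reading_word_append reading_word_map)
  ultimately show ?thesis
    unfolding embed_def by (simp add: refill_reading_word)
qed

text \<open>The blocks above and below contain no letters \<open>i + c\<close> and \<open>i + c + 1\<close>.\<close>

lemma Fop_embed:
  assumes U: "is_ssyt M mu U" and i: "1 \<le> i" "i \<le> M"
  shows "Fop (i + c) (embed U) = map_option embed (Fop i U)"
proof -
  let ?w = "reading_word U"
  let ?wb = "reading_word bottom_rows" and ?wt = "reading_word top_rows"
  have nb: "\<forall>x\<in>set ?wb. x \<noteq> i + c \<and> x \<noteq> Suc (i + c)" using bottom_letters i by fastforce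
  have nt: "\<forall>x\<in>set ?wt. x \<noteq> i + c \<and> x \<noteq> Suc (i + c)" using top_letters i by fastforce
  have u: "unmatched_closes (i + c) 0 0 (reading_word (embed U))
      = map (\<lambda>e. e + length ?wb) (unmatched_closes i 0 0 ?w)"
  proof -
    have "unmatched_closes (i + c) 0 0 (reading_word (embed U))
        = unmatched_closes (i + c) 0 (length ?wb) (map (\<lambda>x. x + c) ?w)"
      unfolding reading_word_embed unmatched_closes_append
      using unmatched_closes_no_brackets[OF nb] unmatched_closes_no_brackets[OF nt] by simp
    also have "\<dots> = unmatched_closes i 0 (length ?wb) ?w" by (rule unmatched_closes_map_add)
    also have "\<dots> = map (\<lambda>e. e + length ?wb) (unmatched_closes i 0 0 ?w)"
      using unmatched_closes_shift[of i 0 0 "length ?wb" ?w] by simp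
    finally show ?thesis .
  qed
  show ?thesis
  proof (cases "unmatched_closes i 0 0 ?w = []")
    case True
    then show ?thesis unfolding Fop_refill Let_def u by simp
  next
    case False
    define q where "q = last (unmatched_closes i 0 0 ?w)"
    have "q \<in> set (unmatched_closes i 0 0 ?w)" unfolding q_def using False by simp
    then have "q < length ?w" using unmatched_closes_nth by fastforce
    then have "(reading_word (embed U))[q + length ?wb := Suc (i + c)]
        = ?wb @ map (\<lambda>x. x + c) (?w[q := Suc i]) @ ?wt"
      unfolding reading_word_embed by (simp add: list_update_append map_update)
    moreover have "last (map (\<lambda>e. e + length ?wb) (unmatched_closes i 0 0 ?w)) = q + length ?wb"
      unfolding q_def using False by (simp add: last_map)
    ultimately show ?thesis
      unfolding Fop_refill Let_def u using False refill_embed[of "?w[q := Suc i]" U]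
      by (simp add: q_def)
  qed
qed

lemma Bstep_embed:
  assumes "Bstep M mu U V"
  shows "Bstep n lam (embed U) (embed V)"
proof -
  obtain i where U: "is_ssyt M mu U" and V: "is_ssyt M mu V" and i: "1 \<le> i" "i \<le> M"
    and F: "Fop i U = Some V"
    using assms unfolding Bstep_def Btab_def by blast
  have "Fop (i + c) (embed U) = Some (embed V)" using Fop_embed[OF U i] F by simp
  moreover have "1 \<le> i + c" "i + c \<le> n" using i M_add_c_le by auto
  ultimately show ?thesis
    unfolding Bstep_def Btab_def using embed_ssyt[OF U] embed_ssyt[OF V] by blast
qed

lemma Ble_embed: "Ble M mu U V \<Longrightarrow> Ble n lam (embed U) (embed V)"
  unfolding Ble_def
  by (rule rtranclp_map[of "Bstep M mu" U V "Bstep n lam" embed]) (auto intro: Bstep_embed)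

text \<open>Counting letters: the operator changes a letter \<open>k\<close> into \<open>k + 1\<close>, while the letters
  \<open>k \<le> c\<close> and \<open>k > M + c + 1\<close> occur only in the fixed blocks.\<close>

lemma Bstep_embed_reflect:
  assumes W: "is_ssyt M mu W" and W': "is_ssyt M mu W'" and step: "Bstep n lam (embed W) (embed W')"
  shows "Bstep M mu W W'"
proof -
  obtain k where F: "Fop k (embed W) = Some (embed W')" using step unfolding Bstep_def by blast
  obtain p where p: "p < length (reading_word (embed W))" "reading_word (embed W) ! p = k"
    "reading_word (embed W') = (reading_word (embed W))[p := Suc k]"
    using reading_word_Fop[OF F] .
  have cnt: "count_list (reading_word (embed W')) k < count_list (reading_word (embed W)) k"
    "count_list (reading_word (embed W)) (Suc k) < count_list (reading_word (embed W')) (Suc k)"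
    using count_list_list_update[OF p(1), where v = "Suc k" and c = k]
      count_list_list_update[OF p(1), where v = "Suc k" and c = "Suc k"] p(2,3) by auto
  have outer: "count_list (reading_word (embed X)) x
      = count_list (reading_word bottom_rows) x + count_list (reading_word top_rows) x"
    if X: "is_ssyt M mu X" and x: "x \<le> c \<or> M + 1 + c < x" for X x
  proof -
    have "y + c \<noteq> x" if "y \<in> set (reading_word X)" for y
      using ssyt_reading_word_bounds[OF X that] x by auto
    then have "x \<notin> set (map (\<lambda>x. x + c) (reading_word X))" by auto
    then show ?thesis unfolding reading_word_embed by simp
  qed
  have "c < k"
  proof (rule ccontr)
    assume "\<not> c < k"
    then show False using cnt(1) outer[OF W, of k] outer[OF W', of k] by simp
  qed
  moreover have "k \<le> M + c"
  proof (rule ccontr)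
    assume "\<not> k \<le> M + c"
    then show False using cnt(2) outer[OF W, of "Suc k"] outer[OF W', of "Suc k"] by simp
  qed
  ultimately have i: "1 \<le> k - c" "k - c \<le> M" "k = (k - c) + c" by auto
  have "map_option embed (Fop (k - c) W) = Some (embed W')"
    using Fop_embed[OF W i(1,2)] F i(3) by simp
  then have "Fop (k - c) W = Some W'" using inj_embed by (auto dest: injD)
  then show ?thesis unfolding Bstep_def Btab_def using W W' i by blast
qed

text \<open>Reading words only increase along the order, so a tableau between the images of the minimal
  and the maximal tableau of shape \<open>mu\<close> agrees with both on the fixed blocks.\<close>

lemma interval_subset_embed_image:
  assumes Z: "is_ssyt n lam Z"
    and lo: "Ble n lam (embed (min_tableau mu)) Z" and hi: "Ble n lam Z (embed (max_tableau M mu))"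
  shows "Z \<in> embed ` Btab M mu"
proof -
  define Zt Zm Zb where "Zt = take c Z" and "Zm = drop c (take b Z)" and "Zb = drop b Z"
  have Z_eq: "Z = Zt @ Zm @ Zb"
    unfolding Zt_def Zm_def Zb_def using c_less_b
    by (metis append.assoc append_take_drop_id less_imp_le_nat min_def take_take)
  have Zm: "is_ssyt n mu Zm" unfolding Zm_def mu_def by (intro ssyt_drop ssyt_take Z)
  have shape: "map length Zt = map length top_rows" "map length Zb = map length bottom_rows"
    using ssyt_map_length[OF ssyt_take[OF Z, of c]] ssyt_map_length[OF ssyt_drop[OF Z, of b]]
      ssyt_map_length[OF top_rows_ssyt] ssyt_map_length[OF bottom_rows_ssyt]
    unfolding Zt_def Zb_def by simp_all
  have lengths: "length (reading_word Zb) = length (reading_word bottom_rows)"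
    "length (reading_word Zm) = length (map (\<lambda>x. x + c) (reading_word (min_tableau mu)))"
    "length (reading_word Zm) = length (map (\<lambda>x. x + c) (reading_word (max_tableau M mu)))"
    using shape length_reading_word_ssyt[OF Zm] length_reading_word_ssyt[OF min_mu_ssyt]
      length_reading_word_ssyt[OF max_mu_ssyt] by (simp_all add: length_reading_word)
  have rwZ: "reading_word Z = reading_word Zb @ reading_word Zm @ reading_word Zt"
    unfolding Z_eq reading_word_append by simp
  have "list_all2 (\<le>) (reading_word bottom_rows @ map (\<lambda>x. x + c) (reading_word (min_tableau mu))
      @ reading_word top_rows) (reading_word Zb @ reading_word Zm @ reading_word Zt)"
    "list_all2 (\<le>) (reading_word Zb @ reading_word Zm @ reading_word Zt)
      (reading_word bottom_rows @ map (\<lambda>x. x + c) (reading_word (max_tableau M mu))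
        @ reading_word top_rows)"
    using Ble_reading_word_le[OF lo] Ble_reading_word_le[OF hi] unfolding rwZ reading_word_embed .
  then have lower: "list_all2 (\<le>) (reading_word bottom_rows) (reading_word Zb)"
      "list_all2 (\<le>) (map (\<lambda>x. x + c) (reading_word (min_tableau mu))) (reading_word Zm)"
      "list_all2 (\<le>) (reading_word top_rows) (reading_word Zt)"
    and upper: "list_all2 (\<le>) (reading_word Zb) (reading_word bottom_rows)"
      "list_all2 (\<le>) (reading_word Zm) (map (\<lambda>x. x + c) (reading_word (max_tableau M mu)))"
      "list_all2 (\<le>) (reading_word Zt) (reading_word top_rows)"
    using lengths by (simp_all add: list_all2_append)
  have "reading_word Zb = reading_word bottom_rows" "reading_word Zt = reading_word top_rows"
    using list_all2_antisym[OF _ upper(1) lower(1)] list_all2_antisym[OF _ upper(3) lower(3)]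
    by simp_all
  then have "Zb = bottom_rows" "Zt = top_rows" using reading_word_inj shape by simp_all
  moreover have "c < x \<and> x \<le> M + 1 + c" if "r \<in> set Zm" "x \<in> set r" for r x
  proof -
    have "x \<in> set (reading_word Zm)" using that unfolding reading_word_def by auto
    then show ?thesis
      using list_all2_le_between[OF lower(2) upper(2), of "Suc c" "M + 1 + c" x]
        ssyt_reading_word_bounds[OF min_mu_ssyt] ssyt_reading_word_bounds[OF max_mu_ssyt] by force
  qed
  then have "is_ssyt M mu (map (map (\<lambda>x. x - c)) Zm)"
    "map (map (\<lambda>x. x + c)) (map (map (\<lambda>x. x - c)) Zm) = Zm"
    using ssyt_unshift[OF mu_partition Zm] by blast+
  ultimately have "Z = embed (map (map (\<lambda>x. x - c)) Zm)" "map (map (\<lambda>x. x - c)) Zm \<in> Btab M mu"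
    using Z_eq unfolding embed_def Btab_def by simp_all
  then show ?thesis by blast
qed

abbreviation block_interval :: "nat list list set" where
  "block_interval \<equiv> interval (Btab n lam) (Ble n lam) (embed (min_tableau mu)) (embed (max_tableau M mu))"

lemma interval_eq_embed_image: "block_interval = embed ` Btab M mu"
proof
  show "block_interval \<subseteq> embed ` Btab M mu"
    using interval_subset_embed_image by (auto simp: interval_def Btab_def)
  show "embed ` Btab M mu \<subseteq> block_interval"
    unfolding interval_def Btab_def
    using embed_ssyt Ble_embed Ble_min_tableau[OF mu_partition]
      Ble_max_tableau[OF mu_partition length_mu_le]
    by auto
qed

text \<open>A chain from \<open>embed U\<close> to \<open>embed V\<close> stays inside the interval, hence inside the image.\<close>

lemma Ble_embed_iff:
  assumes U: "is_ssyt M mu U" and V: "is_ssyt M mu V"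
  shows "Ble n lam (embed U) (embed V) \<longleftrightarrow> Ble M mu U V"
proof
  assume "Ble n lam (embed U) (embed V)"
  have "Ble n lam Z (embed V) \<Longrightarrow> \<exists>W. is_ssyt M mu W \<and> Z = embed W \<and> Ble M mu U W"
    if "(Bstep n lam)\<^sup>*\<^sup>* (embed U) Z" for Z
    using that
  proof (induction rule: rtranclp_induct)
    case base then show ?case using U unfolding Ble_def by blast
  next
    case (step Y Z)
    then have "Ble n lam Y (embed V)" unfolding Ble_def by (meson converse_rtranclp_into_rtranclp)
    then obtain W where W: "is_ssyt M mu W" "Y = embed W" "Ble M mu U W" using step.IH by blast
    have "Ble n lam (embed (min_tableau mu)) Z"
      using Ble_embed[OF Ble_min_tableau[OF mu_partition U]] step(1,2)
      unfolding Ble_def by (meson rtranclp.rtrancl_into_rtrancl rtranclp_trans)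
    moreover have "Ble n lam Z (embed (max_tableau M mu))"
      using step.prems Ble_embed[OF Ble_max_tableau[OF mu_partition length_mu_le V]]
      unfolding Ble_def by (meson rtranclp_trans)
    moreover have "is_ssyt n lam Z" using step(2) unfolding Bstep_def Btab_def by blast
    ultimately obtain W' where W': "is_ssyt M mu W'" "Z = embed W'"
      using interval_subset_embed_image unfolding Btab_def by blast
    have "Bstep M mu W W'" using Bstep_embed_reflect[OF W(1) W'(1)] step(2) W(2) W'(2) by simp
    with W(3) have "Ble M mu U W'" unfolding Ble_def by (rule rtranclp.rtrancl_into_rtrancl)
    then show ?case using W' by blast
  qed
  then show "Ble M mu U V"
    using \<open>Ble n lam (embed U) (embed V)\<close> inj_embed unfolding Ble_def by (blast dest: injD)
qed (rule Ble_embed)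

theorem interval_iso: "poset_iso (Btab M mu) (Ble M mu) block_interval (Ble n lam)"
  unfolding poset_iso_def interval_eq_embed_image bij_betw_def
  using inj_embed Ble_embed_iff by (auto simp: Btab_def intro: inj_on_subset)

end

theorem lemma5p1:
  fixes lam :: "nat list" and a b n :: nat
  assumes "is_partition lam"
    and "1 \<le> a" and "a \<le> b" and "b \<le> length lam"
    and "length lam \<le> n"
  defines "mu \<equiv> drop (a - 1) (take b lam)"
    and "M \<equiv> n - length lam + (b - a + 1)"
  shows "(\<exists>S\<in>Btab n lam. \<exists>T\<in>Btab n lam.
            poset_iso (Btab M mu) (Ble M mu) (interval (Btab n lam) (Ble n lam) S T) (Ble n lam))
         \<and> (\<not> is_lattice (Btab M mu) (Ble M mu) \<longrightarrow> \<not> is_lattice (Btab n lam) (Ble n lam))"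
proof -
  interpret B: row_block lam "a - 1" b n using assms(1-5) by unfold_locales auto
  have block: "mu = B.mu" "M = B.M"
    unfolding mu_def M_def B.mu_def B.M_def using assms(2,3) by simp_all
  define S T where "S = B.embed (min_tableau B.mu)" and "T = B.embed (max_tableau B.M B.mu)"
  have ST: "S \<in> Btab n lam" "T \<in> Btab n lam"
    unfolding S_def T_def Btab_def using B.embed_ssyt B.min_mu_ssyt B.max_mu_ssyt by auto
  have iso: "poset_iso (Btab M mu) (Ble M mu) (interval (Btab n lam) (Ble n lam) S T) (Ble n lam)"
    unfolding S_def T_def block by (rule B.interval_iso)
  have "is_lattice (Btab M mu) (Ble M mu)" if "is_lattice (Btab n lam) (Ble n lam)"
    using poset_iso_is_lattice[OF iso is_lattice_interval[OF that ST]] by (simp add: Ble_def)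
  then show ?thesis using ST iso by blast
qed

end
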